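(* Let $\mathcal{C}$ be a deflation-exact category and let $\mathcal{A}$ be a non-empty full subcategory satisfying axiom (A3). Consider a commutative diagram $$\begin{array}{ccccc} X&\rightarrowtail&Y&\twoheadrightarrow&Z\\ \downarrow&&\downarrow&&\downarrow\\ X'&\rightarrowtail&Y'&\twoheadrightarrow&Z'\end{array}$$ whose rows are conflations and whose vertical arrows are deflations. If $X'\in\mathcal{A}$, then the diagram can be completed to a commutative $3\times 3$ diagram $$\begin{array}{ccccc} X''&\rightarrowtail&Y''&\twoheadrightarrow&Z''\\ \downarrow&&\downarrow&&\downarrow\\ X&\rightarrowtail&Y&\twoheadrightarrow&Z\\ \downarrow&&\downarrow&&\downarrow\\ X'&\rightarrowtail&Y'&\twoheadrightarrow&Z'\end{array}$$ in which all rows and all columns are conflations (the upper vertical maps being inflations). Moreover, the upper left square is a pullback and the lower right square is a pushout.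
   Context: A conflation category is an additive category with a class of kernel-cokernel pairs (closed under isomorphisms) called conflations; first map an inflation ($\rightarrowtail$), second a deflation ($\twoheadrightarrow$). A deflation-exact category is a conflation category satisfying: (R0) $1_0$ is a deflation; (R1) composites of deflations are deflations; (R2) pullbacks of deflations along arbitrary morphisms exist and are deflations. Axiom (A3): if $a\colon C\rightarrowtail D$ is an inflation and $b\colon C\twoheadrightarrow A$ is a deflation with $A\in\mathcal{A}$, the pushout of $a$ along $b$ exists and yields a deflation $D\twoheadrightarrow P$ and an inflation $A\rightarrowtail P$. *)

theory Defs
  imports Main
begin

text \<open>An (abstract, small) category presented by objects, morphisms, source/target,
  composition (cmp C g f = g after f) and identities, together with the additive
  structure on hom-sets.\<close>

record ('o, 'm) addcat =
  Ob   :: "'o set"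
  Mor  :: "'m set"
  src  :: "'m \<Rightarrow> 'o"
  tgt  :: "'m \<Rightarrow> 'o"
  cmp  :: "'m \<Rightarrow> 'm \<Rightarrow> 'm"
  idm  :: "'o \<Rightarrow> 'm"
  madd :: "'m \<Rightarrow> 'm \<Rightarrow> 'm"
  mzero :: "'o \<Rightarrow> 'o \<Rightarrow> 'm"
  mneg :: "'m \<Rightarrow> 'm"

definition hom :: "('o, 'm, 'x) addcat_scheme \<Rightarrow> 'o \<Rightarrow> 'o \<Rightarrow> 'm set" where
  "hom C A B = {f \<in> Mor C. src C f = A \<and> tgt C f = B}"

definition is_zero_obj :: "('o, 'm, 'x) addcat_scheme \<Rightarrow> 'o \<Rightarrow> bool" where
  "is_zero_obj C Z \<longleftrightarrow> Z \<in> Ob C \<and>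
     (\<forall>A\<in>Ob C. (\<exists>!f. f \<in> hom C Z A) \<and> (\<exists>!f. f \<in> hom C A Z))"

definition additive_category :: "('o, 'm, 'x) addcat_scheme \<Rightarrow> bool" where
  "additive_category C \<longleftrightarrow>
    (\<forall>f\<in>Mor C. src C f \<in> Ob C \<and> tgt C f \<in> Ob C) \<and>
    (\<forall>A\<in>Ob C. idm C A \<in> hom C A A) \<and>
    (\<forall>A B D f g. f \<in> hom C A B \<longrightarrow> g \<in> hom C B D \<longrightarrow> cmp C g f \<in> hom C A D) \<and>
    (\<forall>f g h. f \<in> Mor C \<longrightarrow> g \<in> Mor C \<longrightarrow> h \<in> Mor C \<longrightarrow>
        tgt C f = src C g \<longrightarrow> tgt C g = src C h \<longrightarrow>
        cmp C h (cmp C g f) = cmp C (cmp C h g) f) \<and>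
    (\<forall>f\<in>Mor C. cmp C (idm C (tgt C f)) f = f \<and> cmp C f (idm C (src C f)) = f) \<and>
    (\<forall>A\<in>Ob C. \<forall>B\<in>Ob C. mzero C A B \<in> hom C A B \<and>
       (\<forall>f\<in>hom C A B. mneg C f \<in> hom C A B \<and>
          madd C f (mzero C A B) = f \<and> madd C f (mneg C f) = mzero C A B \<and>
          (\<forall>g\<in>hom C A B. madd C f g \<in> hom C A B \<and> madd C f g = madd C g f \<and>
             (\<forall>h\<in>hom C A B. madd C (madd C f g) h = madd C f (madd C g h))))) \<and>
    (\<forall>A B D f g h. f \<in> hom C A B \<longrightarrow> g \<in> hom C A B \<longrightarrow> h \<in> hom C B D \<longrightarrow>
        cmp C h (madd C f g) = madd C (cmp C h f) (cmp C h g)) \<and>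
    (\<forall>A B D f g k. f \<in> hom C B D \<longrightarrow> g \<in> hom C B D \<longrightarrow> k \<in> hom C A B \<longrightarrow>
        cmp C (madd C f g) k = madd C (cmp C f k) (cmp C g k)) \<and>
    (\<exists>Z. is_zero_obj C Z) \<and>
    (\<forall>A\<in>Ob C. \<forall>B\<in>Ob C. \<exists>S\<in>Ob C. \<exists>i1 i2 p1 p2.
        i1 \<in> hom C A S \<and> i2 \<in> hom C B S \<and> p1 \<in> hom C S A \<and> p2 \<in> hom C S B \<and>
        cmp C p1 i1 = idm C A \<and> cmp C p2 i2 = idm C B \<and>
        cmp C p2 i1 = mzero C A B \<and> cmp C p1 i2 = mzero C B A \<and>
        madd C (cmp C i1 p1) (cmp C i2 p2) = idm C S)"

definition is_kernel :: "('o, 'm, 'x) addcat_scheme \<Rightarrow> 'm \<Rightarrow> 'm \<Rightarrow> bool" where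
  "is_kernel C f g \<longleftrightarrow> f \<in> Mor C \<and> g \<in> Mor C \<and> tgt C f = src C g \<and>
     cmp C g f = mzero C (src C f) (tgt C g) \<and>
     (\<forall>T\<in>Ob C. \<forall>h\<in>hom C T (src C g). cmp C g h = mzero C T (tgt C g) \<longrightarrow>
        (\<exists>!u. u \<in> hom C T (src C f) \<and> cmp C f u = h))"

definition is_cokernel :: "('o, 'm, 'x) addcat_scheme \<Rightarrow> 'm \<Rightarrow> 'm \<Rightarrow> bool" where
  "is_cokernel C g f \<longleftrightarrow> f \<in> Mor C \<and> g \<in> Mor C \<and> tgt C f = src C g \<and>
     cmp C g f = mzero C (src C f) (tgt C g) \<and>
     (\<forall>T\<in>Ob C. \<forall>h\<in>hom C (tgt C f) T. cmp C h f = mzero C (src C f) T \<longrightarrow>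
        (\<exists>!u. u \<in> hom C (tgt C g) T \<and> cmp C u g = h))"

definition kc_pair :: "('o, 'm, 'x) addcat_scheme \<Rightarrow> 'm \<Rightarrow> 'm \<Rightarrow> bool" where
  "kc_pair C f g \<longleftrightarrow> is_kernel C f g \<and> is_cokernel C g f"

definition iso :: "('o, 'm, 'x) addcat_scheme \<Rightarrow> 'm \<Rightarrow> bool" where
  "iso C f \<longleftrightarrow> f \<in> Mor C \<and> (\<exists>g\<in>hom C (tgt C f) (src C f).
      cmp C g f = idm C (src C f) \<and> cmp C f g = idm C (tgt C f))"

text \<open>Conflations are given as a set Cf of composable pairs (inflation, deflation).\<close>
definition conflation_category :: "('o, 'm, 'x) addcat_scheme \<Rightarrow> ('m \<times> 'm) set \<Rightarrow> bool" where
  "conflation_category C Cf \<longleftrightarrow> additive_category C \<and>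
     (\<forall>(f, g)\<in>Cf. kc_pair C f g) \<and>
     (\<forall>f g f' g' a b c. (f, g) \<in> Cf \<longrightarrow> f' \<in> Mor C \<longrightarrow> g' \<in> Mor C \<longrightarrow>
        tgt C f' = src C g' \<longrightarrow> iso C a \<longrightarrow> iso C b \<longrightarrow> iso C c \<longrightarrow>
        src C a = src C f \<longrightarrow> tgt C a = src C f' \<longrightarrow>
        src C b = tgt C f \<longrightarrow> tgt C b = tgt C f' \<longrightarrow>
        src C c = tgt C g \<longrightarrow> tgt C c = tgt C g' \<longrightarrow>
        cmp C b f = cmp C f' a \<longrightarrow> cmp C c g = cmp C g' b \<longrightarrow> (f', g') \<in> Cf)"

definition inflation :: "('m \<times> 'm) set \<Rightarrow> 'm \<Rightarrow> bool" where
  "inflation Cf f \<longleftrightarrow> (\<exists>g. (f, g) \<in> Cf)"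

definition deflation :: "('m \<times> 'm) set \<Rightarrow> 'm \<Rightarrow> bool" where
  "deflation Cf g \<longleftrightarrow> (\<exists>f. (f, g) \<in> Cf)"

text \<open>Pullback square: f : A \<rightarrow> D, g : B \<rightarrow> D, q1 : P \<rightarrow> A, q2 : P \<rightarrow> B with f q1 = g q2.\<close>
definition is_pullback :: "('o, 'm, 'x) addcat_scheme \<Rightarrow> 'm \<Rightarrow> 'm \<Rightarrow> 'm \<Rightarrow> 'm \<Rightarrow> bool" where
  "is_pullback C f g q1 q2 \<longleftrightarrow> f \<in> Mor C \<and> g \<in> Mor C \<and> tgt C f = tgt C g \<and>
     q1 \<in> hom C (src C q1) (src C f) \<and> q2 \<in> hom C (src C q1) (src C g) \<and>
     cmp C f q1 = cmp C g q2 \<and>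
     (\<forall>T\<in>Ob C. \<forall>u\<in>hom C T (src C f). \<forall>v\<in>hom C T (src C g). cmp C f u = cmp C g v \<longrightarrow>
        (\<exists>!w. w \<in> hom C T (src C q1) \<and> cmp C q1 w = u \<and> cmp C q2 w = v))"

text \<open>Pushout square: a : A \<rightarrow> B, b : A \<rightarrow> D, r1 : B \<rightarrow> P, r2 : D \<rightarrow> P with r1 a = r2 b.\<close>
definition is_pushout :: "('o, 'm, 'x) addcat_scheme \<Rightarrow> 'm \<Rightarrow> 'm \<Rightarrow> 'm \<Rightarrow> 'm \<Rightarrow> bool" where
  "is_pushout C a b r1 r2 \<longleftrightarrow> a \<in> Mor C \<and> b \<in> Mor C \<and> src C a = src C b \<and>
     r1 \<in> hom C (tgt C a) (tgt C r1) \<and> r2 \<in> hom C (tgt C b) (tgt C r1) \<and>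
     cmp C r1 a = cmp C r2 b \<and>
     (\<forall>T\<in>Ob C. \<forall>u\<in>hom C (tgt C a) T. \<forall>v\<in>hom C (tgt C b) T. cmp C u a = cmp C v b \<longrightarrow>
        (\<exists>!w. w \<in> hom C (tgt C r1) T \<and> cmp C w r1 = u \<and> cmp C w r2 = v))"

definition deflation_exact :: "('o, 'm, 'x) addcat_scheme \<Rightarrow> ('m \<times> 'm) set \<Rightarrow> bool" where
  "deflation_exact C Cf \<longleftrightarrow> conflation_category C Cf \<and>
     (\<forall>Z. is_zero_obj C Z \<longrightarrow> deflation Cf (idm C Z)) \<and>
     (\<forall>p q. deflation Cf p \<longrightarrow> deflation Cf q \<longrightarrow> tgt C p = src C q \<longrightarrow>
        deflation Cf (cmp C q p)) \<and>
     (\<forall>p f. deflation Cf p \<longrightarrow> f \<in> Mor C \<longrightarrow> tgt C f = tgt C p \<longrightarrow>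
        (\<exists>q1 q2. is_pullback C f p q1 q2 \<and> deflation Cf q1))"

definition axiom_A3 :: "('o, 'm, 'x) addcat_scheme \<Rightarrow> ('m \<times> 'm) set \<Rightarrow> 'o set \<Rightarrow> bool" where
  "axiom_A3 C Cf AA \<longleftrightarrow>
     (\<forall>a b. inflation Cf a \<longrightarrow> deflation Cf b \<longrightarrow> src C a = src C b \<longrightarrow> tgt C b \<in> AA \<longrightarrow>
        (\<exists>r1 r2. is_pushout C a b r1 r2 \<and> deflation Cf r1 \<and> inflation Cf r2))"

end

theory Submission
  imports Defs
begin

text \<open>
  Pull back the deflation \<open>y'\<close> along \<open>h\<close> to get \<open>Q\<close> with projections \<open>qb : Q \<rightarrow> Z\<close>, a
  deflation whose kernel \<open>k'\<close> lifts \<open>x'\<close>, and \<open>qa : Q \<rightarrow> Y'\<close>; let \<open>\<psi> : Y \<rightarrow> Q\<close> be induced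
  by \<open>y\<close> and \<open>g\<close>. By (A3) the pushout \<open>P\<close> of \<open>x\<close> along \<open>f\<close> sits in a conflation
  \<open>X' \<rightarrow> P \<rightarrow> Z\<close>, and the comparison map \<open>P \<rightarrow> Q\<close> is an isomorphism by the short five
  lemma, so \<open>\<psi>\<close> is a deflation; its kernel is \<open>x \<circ> f''\<close>. Pulling back the kernel
  \<open>Z'' \<rightarrow> Q\<close> of \<open>qa\<close> along \<open>\<psi>\<close> gives \<open>R\<close> with a deflation \<open>R \<rightarrow> Z''\<close> whose kernel is
  \<open>X''\<close> (the top row) and a kernel \<open>R \<rightarrow> Y\<close> of \<open>g = qa \<circ> \<psi>\<close> (the middle column).
  The upper left square is a pullback because \<open>h''\<close> is monic, and the lower right square
  is a pushout because \<open>f\<close> is epic.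
\<close>

section \<open>Preadditive categories\<close>

text \<open>The clauses of \<^const>\<open>additive_category\<close> without the zero object and the biproducts,
  which the argument never uses.\<close>

locale preadditive_cat =
  fixes C :: "('o, 'm, 'x) addcat_scheme"
  assumes Mor_Ob: "\<forall>f\<in>Mor C. src C f \<in> Ob C \<and> tgt C f \<in> Ob C"
    and idm_hom: "\<forall>A\<in>Ob C. idm C A \<in> hom C A A"
    and cmp_hom: "\<forall>A B D f g. f \<in> hom C A B \<longrightarrow> g \<in> hom C B D \<longrightarrow> cmp C g f \<in> hom C A D"
    and cmp_assoc_law: "\<forall>f g h. f \<in> Mor C \<longrightarrow> g \<in> Mor C \<longrightarrow> h \<in> Mor C \<longrightarrow>
        tgt C f = src C g \<longrightarrow> tgt C g = src C h \<longrightarrow>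
        cmp C h (cmp C g f) = cmp C (cmp C h g) f"
    and idm_unit_law: "\<forall>f\<in>Mor C. cmp C (idm C (tgt C f)) f = f \<and> cmp C f (idm C (src C f)) = f"
    and hom_group_law: "\<forall>A\<in>Ob C. \<forall>B\<in>Ob C. mzero C A B \<in> hom C A B \<and>
       (\<forall>f\<in>hom C A B. mneg C f \<in> hom C A B \<and>
          madd C f (mzero C A B) = f \<and> madd C f (mneg C f) = mzero C A B \<and>
          (\<forall>g\<in>hom C A B. madd C f g \<in> hom C A B \<and> madd C f g = madd C g f \<and>
             (\<forall>h\<in>hom C A B. madd C (madd C f g) h = madd C f (madd C g h))))"
    and cmp_madd_right_law: "\<forall>A B D f g h. f \<in> hom C A B \<longrightarrow> g \<in> hom C A B \<longrightarrow> h \<in> hom C B D \<longrightarrow>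
        cmp C h (madd C f g) = madd C (cmp C h f) (cmp C h g)"
    and cmp_madd_left_law: "\<forall>A B D f g k. f \<in> hom C B D \<longrightarrow> g \<in> hom C B D \<longrightarrow> k \<in> hom C A B \<longrightarrow>
        cmp C (madd C f g) k = madd C (cmp C f k) (cmp C g k)"

lemma additive_imp_preadditive: "additive_category C \<Longrightarrow> preadditive_cat C"
  unfolding additive_category_def preadditive_cat_def by (elim conjE) (intro conjI; assumption)

context preadditive_cat
begin

abbreviation comp_op (infixr "\<cdot>" 70) where "g \<cdot> f \<equiv> cmp C g f"
abbreviation add_op (infixl "\<oplus>" 65) where "f \<oplus> g \<equiv> madd C f g"
abbreviation neg_op ("\<ominus> _" [81] 80) where "\<ominus> f \<equiv> mneg C f"
abbreviation zero_op ("\<zero>\<^bsub>_,_\<^esub>") where "\<zero>\<^bsub>A,B\<^esub> \<equiv> mzero C A B"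

lemma Mor_src_Ob [simp]: "f \<in> Mor C \<Longrightarrow> src C f \<in> Ob C"
  and Mor_tgt_Ob [simp]: "f \<in> Mor C \<Longrightarrow> tgt C f \<in> Ob C"
  using Mor_Ob by blast+

lemma in_hom_iff: "f \<in> hom C A B \<longleftrightarrow> f \<in> Mor C \<and> src C f = A \<and> tgt C f = B"
  unfolding hom_def by blast

lemma cmp_Mor [simp]: "f \<in> Mor C \<Longrightarrow> g \<in> Mor C \<Longrightarrow> tgt C f = src C g \<Longrightarrow> g \<cdot> f \<in> Mor C"
  and cmp_src [simp]: "f \<in> Mor C \<Longrightarrow> g \<in> Mor C \<Longrightarrow> tgt C f = src C g \<Longrightarrow> src C (g \<cdot> f) = src C f"
  and cmp_tgt [simp]: "f \<in> Mor C \<Longrightarrow> g \<in> Mor C \<Longrightarrow> tgt C f = src C g \<Longrightarrow> tgt C (g \<cdot> f) = tgt C g"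
  using cmp_hom[rule_format, of f "src C f" "tgt C f" g "tgt C g"] by (auto simp: in_hom_iff)

lemma cmp_assoc:
  "f \<in> Mor C \<Longrightarrow> g \<in> Mor C \<Longrightarrow> h \<in> Mor C \<Longrightarrow> tgt C f = src C g \<Longrightarrow> tgt C g = src C h \<Longrightarrow>
   h \<cdot> (g \<cdot> f) = (h \<cdot> g) \<cdot> f"
  using cmp_assoc_law by blast

lemma idm_Mor [simp]: "A \<in> Ob C \<Longrightarrow> idm C A \<in> Mor C"
  and idm_src [simp]: "A \<in> Ob C \<Longrightarrow> src C (idm C A) = A"
  and idm_tgt [simp]: "A \<in> Ob C \<Longrightarrow> tgt C (idm C A) = A"
  using idm_hom by (auto simp: in_hom_iff)

lemma cmp_idm_left [simp]: "f \<in> Mor C \<Longrightarrow> tgt C f = B \<Longrightarrow> idm C B \<cdot> f = f"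
  and cmp_idm_right [simp]: "f \<in> Mor C \<Longrightarrow> src C f = A \<Longrightarrow> f \<cdot> idm C A = f"
  using idm_unit_law by blast+

lemma mzero_Mor [simp]: "A \<in> Ob C \<Longrightarrow> B \<in> Ob C \<Longrightarrow> \<zero>\<^bsub>A,B\<^esub> \<in> Mor C"
  and mzero_src [simp]: "A \<in> Ob C \<Longrightarrow> B \<in> Ob C \<Longrightarrow> src C \<zero>\<^bsub>A,B\<^esub> = A"
  and mzero_tgt [simp]: "A \<in> Ob C \<Longrightarrow> B \<in> Ob C \<Longrightarrow> tgt C \<zero>\<^bsub>A,B\<^esub> = B"
  using hom_group_law by (auto simp: in_hom_iff)

lemma hom_group_laws:
  assumes "f \<in> hom C A B" "g \<in> hom C A B" "h \<in> hom C A B"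
  shows "\<ominus> f \<in> hom C A B" "f \<oplus> g \<in> hom C A B" "f \<oplus> \<zero>\<^bsub>A,B\<^esub> = f" "f \<oplus> \<ominus> f = \<zero>\<^bsub>A,B\<^esub>"
    "f \<oplus> g = g \<oplus> f" "(f \<oplus> g) \<oplus> h = f \<oplus> (g \<oplus> h)"
proof -
  have "A \<in> Ob C" "B \<in> Ob C" using assms(1) by (auto simp: in_hom_iff)
  note laws = hom_group_law[rule_format, OF this]
  show "\<ominus> f \<in> hom C A B" "f \<oplus> g \<in> hom C A B" "f \<oplus> \<zero>\<^bsub>A,B\<^esub> = f" "f \<oplus> \<ominus> f = \<zero>\<^bsub>A,B\<^esub>"
    "f \<oplus> g = g \<oplus> f" "(f \<oplus> g) \<oplus> h = f \<oplus> (g \<oplus> h)"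
    using laws assms by blast+
qed

context
  fixes f g
  assumes fg: "f \<in> Mor C" "g \<in> Mor C" "src C g = src C f" "tgt C g = tgt C f"
begin

lemma madd_Mor [simp]: "f \<oplus> g \<in> Mor C"
  and madd_src [simp]: "src C (f \<oplus> g) = src C f"
  and madd_tgt [simp]: "tgt C (f \<oplus> g) = tgt C f"
  using hom_group_laws(2)[of f "src C f" "tgt C f" g g] fg by (auto simp: in_hom_iff)

lemma madd_commute: "f \<oplus> g = g \<oplus> f"
  using hom_group_laws(5)[of f "src C f" "tgt C f" g g] fg by (auto simp: in_hom_iff)

end

lemma madd_assoc:
  "f \<in> Mor C \<Longrightarrow> g \<in> Mor C \<Longrightarrow> h \<in> Mor C \<Longrightarrow> src C g = src C f \<Longrightarrow> tgt C g = tgt C f \<Longrightarrow>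
   src C h = src C f \<Longrightarrow> tgt C h = tgt C f \<Longrightarrow> (f \<oplus> g) \<oplus> h = f \<oplus> (g \<oplus> h)"
  using hom_group_laws(6)[of f "src C f" "tgt C f" g h] by (auto simp: in_hom_iff)

lemma mneg_Mor [simp]: "f \<in> Mor C \<Longrightarrow> \<ominus> f \<in> Mor C"
  and mneg_src [simp]: "f \<in> Mor C \<Longrightarrow> src C (\<ominus> f) = src C f"
  and mneg_tgt [simp]: "f \<in> Mor C \<Longrightarrow> tgt C (\<ominus> f) = tgt C f"
  using hom_group_laws(1)[of f "src C f" "tgt C f" f f] by (auto simp: in_hom_iff)

lemma madd_mzero_right [simp]: "f \<in> Mor C \<Longrightarrow> src C f = A \<Longrightarrow> tgt C f = B \<Longrightarrow> f \<oplus> \<zero>\<^bsub>A,B\<^esub> = f"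
  using hom_group_laws(3)[of f A B f f] by (auto simp: in_hom_iff)

lemma madd_mneg_right: "f \<in> Mor C \<Longrightarrow> src C f = A \<Longrightarrow> tgt C f = B \<Longrightarrow> f \<oplus> \<ominus> f = \<zero>\<^bsub>A,B\<^esub>"
  using hom_group_laws(4)[of f A B f f] by (auto simp: in_hom_iff)

lemma madd_mzero_left [simp]: "f \<in> Mor C \<Longrightarrow> src C f = A \<Longrightarrow> tgt C f = B \<Longrightarrow> \<zero>\<^bsub>A,B\<^esub> \<oplus> f = f"
  by (subst madd_commute) auto

lemma madd_mneg_left: "f \<in> Mor C \<Longrightarrow> src C f = A \<Longrightarrow> tgt C f = B \<Longrightarrow> \<ominus> f \<oplus> f = \<zero>\<^bsub>A,B\<^esub>"
  by (subst madd_commute) (auto simp: madd_mneg_right)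

lemma idempotent_imp_mzero:
  assumes "a \<in> Mor C" "a \<oplus> a = a"
  shows "a = \<zero>\<^bsub>src C a,tgt C a\<^esub>"
proof -
  have "\<zero>\<^bsub>src C a,tgt C a\<^esub> = (a \<oplus> a) \<oplus> \<ominus> a" using assms by (simp add: madd_mneg_right)
  also have "\<dots> = a \<oplus> (a \<oplus> \<ominus> a)" using assms(1) by (simp add: madd_assoc)
  also have "\<dots> = a" using assms(1) by (simp add: madd_mneg_right)
  finally show ?thesis ..
qed

lemma mneg_unique:
  assumes "a \<in> Mor C" "b \<in> Mor C" "src C b = src C a" "tgt C b = tgt C a"
    and "a \<oplus> b = \<zero>\<^bsub>src C a,tgt C a\<^esub>"
  shows "b = \<ominus> a"
proof -
  have "b = (b \<oplus> a) \<oplus> \<ominus> a" using assms by (simp add: madd_assoc madd_mneg_right)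
  also have "\<dots> = \<ominus> a" using assms by (simp add: madd_commute[of b a])
  finally show ?thesis .
qed

lemma cmp_madd_right:
  "f \<in> Mor C \<Longrightarrow> g \<in> Mor C \<Longrightarrow> h \<in> Mor C \<Longrightarrow> src C g = src C f \<Longrightarrow> tgt C g = tgt C f \<Longrightarrow>
   tgt C f = src C h \<Longrightarrow> h \<cdot> (f \<oplus> g) = h \<cdot> f \<oplus> h \<cdot> g"
  using cmp_madd_right_law[rule_format, of f "src C f" "tgt C f" g h "tgt C h"] by (simp add: in_hom_iff)

lemma cmp_madd_left:
  "f \<in> Mor C \<Longrightarrow> g \<in> Mor C \<Longrightarrow> k \<in> Mor C \<Longrightarrow> src C g = src C f \<Longrightarrow> tgt C g = tgt C f \<Longrightarrow>
   tgt C k = src C f \<Longrightarrow> (f \<oplus> g) \<cdot> k = f \<cdot> k \<oplus> g \<cdot> k"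
  using cmp_madd_left_law[rule_format, of f "src C f" "tgt C f" g k "src C k"] by (simp add: in_hom_iff)

lemma cmp_mzero_right [simp]:
  assumes "h \<in> Mor C" "A \<in> Ob C" "src C h = B"
  shows "h \<cdot> \<zero>\<^bsub>A,B\<^esub> = \<zero>\<^bsub>A,tgt C h\<^esub>"
proof -
  have "h \<cdot> \<zero>\<^bsub>A,B\<^esub> \<oplus> h \<cdot> \<zero>\<^bsub>A,B\<^esub> = h \<cdot> \<zero>\<^bsub>A,B\<^esub>"
    using assms by (subst cmp_madd_right[symmetric]) auto
  then show ?thesis using assms by (subst idempotent_imp_mzero) auto
qed

lemma cmp_mzero_left [simp]:
  assumes "f \<in> Mor C" "D \<in> Ob C" "tgt C f = B"
  shows "\<zero>\<^bsub>B,D\<^esub> \<cdot> f = \<zero>\<^bsub>src C f,D\<^esub>"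
proof -
  have "\<zero>\<^bsub>B,D\<^esub> \<cdot> f \<oplus> \<zero>\<^bsub>B,D\<^esub> \<cdot> f = \<zero>\<^bsub>B,D\<^esub> \<cdot> f"
    using assms by (subst cmp_madd_left[symmetric]) auto
  then show ?thesis using assms by (subst idempotent_imp_mzero) auto
qed

lemma mneg_mzero [simp]: "A \<in> Ob C \<Longrightarrow> B \<in> Ob C \<Longrightarrow> \<ominus> \<zero>\<^bsub>A,B\<^esub> = \<zero>\<^bsub>A,B\<^esub>"
  by (rule mneg_unique[symmetric]) auto

lemma cmp_mneg_right:
  assumes "h \<in> Mor C" "a \<in> Mor C" "tgt C a = src C h"
  shows "h \<cdot> \<ominus> a = \<ominus> (h \<cdot> a)"
proof (rule mneg_unique)
  show "h \<cdot> a \<oplus> h \<cdot> \<ominus> a = \<zero>\<^bsub>src C (h \<cdot> a),tgt C (h \<cdot> a)\<^esub>"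
    using assms by (subst cmp_madd_right[symmetric]) (auto simp: madd_mneg_right)
qed (use assms in auto)

lemma cmp_mneg_left:
  assumes "h \<in> Mor C" "a \<in> Mor C" "tgt C h = src C a"
  shows "(\<ominus> a) \<cdot> h = \<ominus> (a \<cdot> h)"
proof (rule mneg_unique)
  show "a \<cdot> h \<oplus> (\<ominus> a) \<cdot> h = \<zero>\<^bsub>src C (a \<cdot> h),tgt C (a \<cdot> h)\<^esub>"
    using assms by (subst cmp_madd_left[symmetric]) (auto simp: madd_mneg_right)
qed (use assms in auto)

lemma isoI:
  assumes "t \<in> Mor C" "r \<in> Mor C" "src C r = tgt C t" "tgt C r = src C t"
    and "r \<cdot> t = idm C (src C t)" "t \<cdot> r = idm C (tgt C t)"
  shows "iso C t"
  unfolding iso_def using assms by (auto simp: in_hom_iff)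

lemma iso_idm: "A \<in> Ob C \<Longrightarrow> iso C (idm C A)"
  by (rule isoI[of _ "idm C A"]) auto

section \<open>Kernels and cokernels\<close>

lemma is_kernelD:
  assumes "is_kernel C k d"
  shows "k \<in> Mor C" "d \<in> Mor C" "tgt C k = src C d" "d \<cdot> k = \<zero>\<^bsub>src C k,tgt C d\<^esub>"
  using assms unfolding is_kernel_def by blast+

lemma kernel_ex1:
  assumes "is_kernel C k d" "T \<in> Ob C" "h \<in> hom C T (src C d)" "d \<cdot> h = \<zero>\<^bsub>T,tgt C d\<^esub>"
  shows "\<exists>!u. u \<in> hom C T (src C k) \<and> k \<cdot> u = h"
proof -
  have "\<forall>T\<in>Ob C. \<forall>h\<in>hom C T (src C d). d \<cdot> h = \<zero>\<^bsub>T,tgt C d\<^esub> \<longrightarrow>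
      (\<exists>!u. u \<in> hom C T (src C k) \<and> k \<cdot> u = h)"
    using assms(1) unfolding is_kernel_def by (elim conjE) assumption
  then show ?thesis using assms(2-4) by blast
qed

lemma kernel_lift:
  assumes "is_kernel C k d" "h \<in> Mor C" "tgt C h = src C d" "d \<cdot> h = \<zero>\<^bsub>src C h,tgt C d\<^esub>"
  obtains u where "u \<in> Mor C" "src C u = src C h" "tgt C u = src C k" "k \<cdot> u = h"
proof -
  have "\<exists>!u. u \<in> hom C (src C h) (src C k) \<and> k \<cdot> u = h"
    using assms by (intro kernel_ex1) (auto simp: in_hom_iff)
  then obtain u where "u \<in> hom C (src C h) (src C k)" "k \<cdot> u = h" by blast
  then show thesis by (intro that) (auto simp: in_hom_iff)
qed

lemma kernel_cancel:
  assumes "is_kernel C k d" "u1 \<in> Mor C" "u2 \<in> Mor C" "src C u2 = src C u1"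
    and "tgt C u1 = src C k" "tgt C u2 = src C k" "k \<cdot> u1 = k \<cdot> u2"
  shows "u1 = u2"
proof -
  note k = is_kernelD[OF assms(1)]
  have "d \<cdot> (k \<cdot> u1) = (d \<cdot> k) \<cdot> u1"
    by (rule cmp_assoc) (use assms(2,5) k in auto)
  also have "\<dots> = \<zero>\<^bsub>src C u1,tgt C d\<^esub>"
    using assms(2,5) k by simp
  finally have ex1: "\<exists>!u. u \<in> hom C (src C u1) (src C k) \<and> k \<cdot> u = k \<cdot> u1"
    using assms(1,2,5) k by (intro kernel_ex1) (auto simp: in_hom_iff)
  have "u1 \<in> hom C (src C u1) (src C k) \<and> k \<cdot> u1 = k \<cdot> u1"
    and "u2 \<in> hom C (src C u1) (src C k) \<and> k \<cdot> u2 = k \<cdot> u1"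
    using assms(2-7) by (auto simp: in_hom_iff)
  from this[THEN the1_equality[OF ex1]] show ?thesis by simp
qed

lemma is_kernelI:
  assumes "k \<in> Mor C" "d \<in> Mor C" "tgt C k = src C d" "d \<cdot> k = \<zero>\<^bsub>src C k,tgt C d\<^esub>"
    and lift: "\<And>h. h \<in> Mor C \<Longrightarrow> tgt C h = src C d \<Longrightarrow> d \<cdot> h = \<zero>\<^bsub>src C h,tgt C d\<^esub> \<Longrightarrow>
      \<exists>u. u \<in> hom C (src C h) (src C k) \<and> k \<cdot> u = h"
    and cancel: "\<And>u1 u2. u1 \<in> Mor C \<Longrightarrow> u2 \<in> Mor C \<Longrightarrow> src C u2 = src C u1 \<Longrightarrow>
      tgt C u1 = src C k \<Longrightarrow> tgt C u2 = src C k \<Longrightarrow> k \<cdot> u1 = k \<cdot> u2 \<Longrightarrow> u1 = u2"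
  shows "is_kernel C k d"
  unfolding is_kernel_def
proof (intro conjI ballI impI assms(1-4))
  fix T h assume "T \<in> Ob C" "h \<in> hom C T (src C d)" "d \<cdot> h = \<zero>\<^bsub>T,tgt C d\<^esub>"
  then obtain u where u: "u \<in> hom C T (src C k)" "k \<cdot> u = h"
    using lift[of h] by (auto simp: in_hom_iff)
  show "\<exists>!u. u \<in> hom C T (src C k) \<and> k \<cdot> u = h"
  proof (rule ex1I[of _ u])
    fix v assume v: "v \<in> hom C T (src C k) \<and> k \<cdot> v = h"
    show "v = u" by (rule cancel) (use u v in \<open>auto simp: in_hom_iff\<close>)
  qed (use u in blast)
qed

lemma is_cokernelD:
  assumes "is_cokernel C d k"
  shows "k \<in> Mor C" "d \<in> Mor C" "tgt C k = src C d" "d \<cdot> k = \<zero>\<^bsub>src C k,tgt C d\<^esub>"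
  using assms unfolding is_cokernel_def by blast+

lemma cokernel_ex1:
  assumes "is_cokernel C d k" "T \<in> Ob C" "h \<in> hom C (tgt C k) T" "h \<cdot> k = \<zero>\<^bsub>src C k,T\<^esub>"
  shows "\<exists>!u. u \<in> hom C (tgt C d) T \<and> u \<cdot> d = h"
proof -
  have "\<forall>T\<in>Ob C. \<forall>h\<in>hom C (tgt C k) T. h \<cdot> k = \<zero>\<^bsub>src C k,T\<^esub> \<longrightarrow>
      (\<exists>!u. u \<in> hom C (tgt C d) T \<and> u \<cdot> d = h)"
    using assms(1) unfolding is_cokernel_def by (elim conjE) assumption
  then show ?thesis using assms(2-4) by blast
qed

lemma cokernel_desc:
  assumes "is_cokernel C d k" "h \<in> Mor C" "src C h = tgt C k" "h \<cdot> k = \<zero>\<^bsub>src C k,tgt C h\<^esub>"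
  obtains u where "u \<in> Mor C" "src C u = tgt C d" "tgt C u = tgt C h" "u \<cdot> d = h"
proof -
  have "\<exists>!u. u \<in> hom C (tgt C d) (tgt C h) \<and> u \<cdot> d = h"
    using assms by (intro cokernel_ex1) (auto simp: in_hom_iff)
  then obtain u where "u \<in> hom C (tgt C d) (tgt C h)" "u \<cdot> d = h" by blast
  then show thesis by (intro that) (auto simp: in_hom_iff)
qed

lemma cokernel_cancel:
  assumes "is_cokernel C d k" "u1 \<in> Mor C" "u2 \<in> Mor C" "tgt C u2 = tgt C u1"
    and "src C u1 = tgt C d" "src C u2 = tgt C d" "u1 \<cdot> d = u2 \<cdot> d"
  shows "u1 = u2"
proof -
  note d = is_cokernelD[OF assms(1)]
  have "(u1 \<cdot> d) \<cdot> k = u1 \<cdot> (d \<cdot> k)"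
    by (rule cmp_assoc[symmetric]) (use assms(2,5) d in auto)
  also have "\<dots> = \<zero>\<^bsub>src C k,tgt C u1\<^esub>"
    using assms(2,5) d by simp
  finally have ex1: "\<exists>!u. u \<in> hom C (tgt C d) (tgt C u1) \<and> u \<cdot> d = u1 \<cdot> d"
    using assms(1,2,5) d by (intro cokernel_ex1) (auto simp: in_hom_iff)
  have "u1 \<in> hom C (tgt C d) (tgt C u1) \<and> u1 \<cdot> d = u1 \<cdot> d"
    and "u2 \<in> hom C (tgt C d) (tgt C u1) \<and> u2 \<cdot> d = u1 \<cdot> d"
    using assms(2-7) by (auto simp: in_hom_iff)
  from this[THEN the1_equality[OF ex1]] show ?thesis by simp
qed

lemma is_cokernelI:
  assumes "k \<in> Mor C" "d \<in> Mor C" "tgt C k = src C d" "d \<cdot> k = \<zero>\<^bsub>src C k,tgt C d\<^esub>"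
    and desc: "\<And>h. h \<in> Mor C \<Longrightarrow> src C h = tgt C k \<Longrightarrow> h \<cdot> k = \<zero>\<^bsub>src C k,tgt C h\<^esub> \<Longrightarrow>
      \<exists>u. u \<in> hom C (tgt C d) (tgt C h) \<and> u \<cdot> d = h"
    and cancel: "\<And>u1 u2. u1 \<in> Mor C \<Longrightarrow> u2 \<in> Mor C \<Longrightarrow> tgt C u2 = tgt C u1 \<Longrightarrow>
      src C u1 = tgt C d \<Longrightarrow> src C u2 = tgt C d \<Longrightarrow> u1 \<cdot> d = u2 \<cdot> d \<Longrightarrow> u1 = u2"
  shows "is_cokernel C d k"
  unfolding is_cokernel_def
proof (intro conjI ballI impI assms(1-4))
  fix T h assume "T \<in> Ob C" "h \<in> hom C (tgt C k) T" "h \<cdot> k = \<zero>\<^bsub>src C k,T\<^esub>"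
  then obtain u where u: "u \<in> hom C (tgt C d) T" "u \<cdot> d = h"
    using desc[of h] by (auto simp: in_hom_iff)
  show "\<exists>!u. u \<in> hom C (tgt C d) T \<and> u \<cdot> d = h"
  proof (rule ex1I[of _ u])
    fix v assume v: "v \<in> hom C (tgt C d) T \<and> v \<cdot> d = h"
    show "v = u" by (rule cancel) (use u v in \<open>auto simp: in_hom_iff\<close>)
  qed (use u in blast)
qed

section \<open>Pullbacks and pushouts\<close>

lemma is_pullbackD:
  assumes "is_pullback C f g q1 q2"
  shows "f \<in> Mor C" "g \<in> Mor C" "tgt C f = tgt C g" "q1 \<in> Mor C" "q2 \<in> Mor C"
    "src C q2 = src C q1" "tgt C q1 = src C f" "tgt C q2 = src C g" "f \<cdot> q1 = g \<cdot> q2"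
proof -
  have "f \<in> Mor C \<and> g \<in> Mor C \<and> tgt C f = tgt C g \<and>
      q1 \<in> hom C (src C q1) (src C f) \<and> q2 \<in> hom C (src C q1) (src C g) \<and> f \<cdot> q1 = g \<cdot> q2"
    using assms unfolding is_pullback_def by (elim conjE) (intro conjI)
  then show "f \<in> Mor C" "g \<in> Mor C" "tgt C f = tgt C g" "q1 \<in> Mor C" "q2 \<in> Mor C"
    "src C q2 = src C q1" "tgt C q1 = src C f" "tgt C q2 = src C g" "f \<cdot> q1 = g \<cdot> q2"
    by (auto simp: in_hom_iff)
qed

lemma pullback_ex1:
  assumes "is_pullback C f g q1 q2" "T \<in> Ob C" "u \<in> hom C T (src C f)" "v \<in> hom C T (src C g)"
    and "f \<cdot> u = g \<cdot> v"
  shows "\<exists>!w. w \<in> hom C T (src C q1) \<and> q1 \<cdot> w = u \<and> q2 \<cdot> w = v"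
proof -
  have "\<forall>T\<in>Ob C. \<forall>u\<in>hom C T (src C f). \<forall>v\<in>hom C T (src C g). f \<cdot> u = g \<cdot> v \<longrightarrow>
      (\<exists>!w. w \<in> hom C T (src C q1) \<and> q1 \<cdot> w = u \<and> q2 \<cdot> w = v)"
    using assms(1) unfolding is_pullback_def by (elim conjE) assumption
  then show ?thesis using assms(2-5) by blast
qed

lemma pullback_lift:
  assumes "is_pullback C f g q1 q2" "u \<in> Mor C" "v \<in> Mor C" "src C v = src C u"
    and "tgt C u = src C f" "tgt C v = src C g" "f \<cdot> u = g \<cdot> v"
  obtains w where "w \<in> Mor C" "src C w = src C u" "tgt C w = src C q1" "q1 \<cdot> w = u" "q2 \<cdot> w = v"
proof -
  have "\<exists>!w. w \<in> hom C (src C u) (src C q1) \<and> q1 \<cdot> w = u \<and> q2 \<cdot> w = v"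
    using assms by (intro pullback_ex1) (auto simp: in_hom_iff)
  then obtain w where "w \<in> hom C (src C u) (src C q1)" "q1 \<cdot> w = u" "q2 \<cdot> w = v" by blast
  then show thesis by (intro that) (auto simp: in_hom_iff)
qed

lemma pullback_cancel:
  assumes "is_pullback C f g q1 q2" "w1 \<in> Mor C" "w2 \<in> Mor C" "src C w2 = src C w1"
    and "tgt C w1 = src C q1" "tgt C w2 = src C q1" "q1 \<cdot> w1 = q1 \<cdot> w2" "q2 \<cdot> w1 = q2 \<cdot> w2"
  shows "w1 = w2"
proof -
  note pb = is_pullbackD[OF assms(1)]
  have "f \<cdot> (q1 \<cdot> w1) = (f \<cdot> q1) \<cdot> w1"
    by (rule cmp_assoc) (use assms(2,5) pb in auto)
  also have "\<dots> = g \<cdot> (q2 \<cdot> w1)"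
    unfolding pb(9) by (rule cmp_assoc[symmetric]) (use assms(2,5) pb in auto)
  finally have ex1: "\<exists>!w. w \<in> hom C (src C w1) (src C q1) \<and> q1 \<cdot> w = q1 \<cdot> w1 \<and> q2 \<cdot> w = q2 \<cdot> w1"
    using assms(1,2,5) pb by (intro pullback_ex1) (auto simp: in_hom_iff)
  have "w1 \<in> hom C (src C w1) (src C q1) \<and> q1 \<cdot> w1 = q1 \<cdot> w1 \<and> q2 \<cdot> w1 = q2 \<cdot> w1"
    and "w2 \<in> hom C (src C w1) (src C q1) \<and> q1 \<cdot> w2 = q1 \<cdot> w1 \<and> q2 \<cdot> w2 = q2 \<cdot> w1"
    using assms(2-8) by (auto simp: in_hom_iff)
  from this[THEN the1_equality[OF ex1]] show ?thesis by simp
qed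

lemma is_pullbackI:
  assumes "f \<in> Mor C" "g \<in> Mor C" "tgt C f = tgt C g" "q1 \<in> Mor C" "q2 \<in> Mor C"
    and "src C q2 = src C q1" "tgt C q1 = src C f" "tgt C q2 = src C g" "f \<cdot> q1 = g \<cdot> q2"
    and lift: "\<And>u v. u \<in> Mor C \<Longrightarrow> v \<in> Mor C \<Longrightarrow> src C v = src C u \<Longrightarrow>
      tgt C u = src C f \<Longrightarrow> tgt C v = src C g \<Longrightarrow> f \<cdot> u = g \<cdot> v \<Longrightarrow>
      \<exists>w. w \<in> hom C (src C u) (src C q1) \<and> q1 \<cdot> w = u \<and> q2 \<cdot> w = v"
    and cancel: "\<And>w1 w2. w1 \<in> Mor C \<Longrightarrow> w2 \<in> Mor C \<Longrightarrow> src C w2 = src C w1 \<Longrightarrow>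
      tgt C w1 = src C q1 \<Longrightarrow> tgt C w2 = src C q1 \<Longrightarrow> q1 \<cdot> w1 = q1 \<cdot> w2 \<Longrightarrow> q2 \<cdot> w1 = q2 \<cdot> w2 \<Longrightarrow>
      w1 = w2"
  shows "is_pullback C f g q1 q2"
  unfolding is_pullback_def
proof (intro conjI ballI impI)
  show "q1 \<in> hom C (src C q1) (src C f)" "q2 \<in> hom C (src C q1) (src C g)"
    using assms(4-8) by (auto simp: in_hom_iff)
  fix T u v assume uv: "T \<in> Ob C" "u \<in> hom C T (src C f)" "v \<in> hom C T (src C g)" "f \<cdot> u = g \<cdot> v"
  then obtain w where w: "w \<in> hom C T (src C q1)" "q1 \<cdot> w = u" "q2 \<cdot> w = v"
    using lift[of u v] by (auto simp: in_hom_iff)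
  show "\<exists>!w. w \<in> hom C T (src C q1) \<and> q1 \<cdot> w = u \<and> q2 \<cdot> w = v"
  proof (rule ex1I[of _ w])
    fix w' assume w': "w' \<in> hom C T (src C q1) \<and> q1 \<cdot> w' = u \<and> q2 \<cdot> w' = v"
    show "w' = w" by (rule cancel) (use w w' in \<open>auto simp: in_hom_iff\<close>)
  qed (use w in blast)
qed (use assms(1-3,9) in auto)

lemma is_pullback_sym:
  assumes "is_pullback C f g q1 q2"
  shows "is_pullback C g f q2 q1"
proof -
  note pb = is_pullbackD[OF assms]
  show ?thesis
  proof (rule is_pullbackI)
    fix u v assume uv: "u \<in> Mor C" "v \<in> Mor C" "src C v = src C u" "tgt C u = src C g"
      "tgt C v = src C f" "g \<cdot> u = f \<cdot> v"
    obtain w where "w \<in> Mor C" "src C w = src C u" "tgt C w = src C q1" "q1 \<cdot> w = v" "q2 \<cdot> w = u"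
      by (rule pullback_lift[OF assms, of v u]) (use uv in auto)
    then show "\<exists>w. w \<in> hom C (src C u) (src C q2) \<and> q2 \<cdot> w = u \<and> q1 \<cdot> w = v"
      using pb by (auto simp: in_hom_iff)
  next
    fix w1 w2 assume w: "w1 \<in> Mor C" "w2 \<in> Mor C" "src C w2 = src C w1" "tgt C w1 = src C q2"
      "tgt C w2 = src C q2" "q2 \<cdot> w1 = q2 \<cdot> w2" "q1 \<cdot> w1 = q1 \<cdot> w2"
    show "w1 = w2" by (rule pullback_cancel[OF assms]) (use w pb in auto)
  qed (use pb in auto)
qed

lemma is_pushoutD:
  assumes "is_pushout C a b r1 r2"
  shows "a \<in> Mor C" "b \<in> Mor C" "src C a = src C b" "r1 \<in> Mor C" "r2 \<in> Mor C"
    "tgt C r2 = tgt C r1" "src C r1 = tgt C a" "src C r2 = tgt C b" "r1 \<cdot> a = r2 \<cdot> b"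
proof -
  have "a \<in> Mor C \<and> b \<in> Mor C \<and> src C a = src C b \<and>
      r1 \<in> hom C (tgt C a) (tgt C r1) \<and> r2 \<in> hom C (tgt C b) (tgt C r1) \<and> r1 \<cdot> a = r2 \<cdot> b"
    using assms unfolding is_pushout_def by (elim conjE) (intro conjI)
  then show "a \<in> Mor C" "b \<in> Mor C" "src C a = src C b" "r1 \<in> Mor C" "r2 \<in> Mor C"
    "tgt C r2 = tgt C r1" "src C r1 = tgt C a" "src C r2 = tgt C b" "r1 \<cdot> a = r2 \<cdot> b"
    by (auto simp: in_hom_iff)
qed

lemma pushout_ex1:
  assumes "is_pushout C a b r1 r2" "T \<in> Ob C" "u \<in> hom C (tgt C a) T" "v \<in> hom C (tgt C b) T"
    and "u \<cdot> a = v \<cdot> b"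
  shows "\<exists>!w. w \<in> hom C (tgt C r1) T \<and> w \<cdot> r1 = u \<and> w \<cdot> r2 = v"
proof -
  have "\<forall>T\<in>Ob C. \<forall>u\<in>hom C (tgt C a) T. \<forall>v\<in>hom C (tgt C b) T. u \<cdot> a = v \<cdot> b \<longrightarrow>
      (\<exists>!w. w \<in> hom C (tgt C r1) T \<and> w \<cdot> r1 = u \<and> w \<cdot> r2 = v)"
    using assms(1) unfolding is_pushout_def by (elim conjE) assumption
  then show ?thesis using assms(2-5) by blast
qed

lemma pushout_desc:
  assumes "is_pushout C a b r1 r2" "u \<in> Mor C" "v \<in> Mor C" "tgt C v = tgt C u"
    and "src C u = tgt C a" "src C v = tgt C b" "u \<cdot> a = v \<cdot> b"
  obtains w where "w \<in> Mor C" "src C w = tgt C r1" "tgt C w = tgt C u" "w \<cdot> r1 = u" "w \<cdot> r2 = v"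
proof -
  have "\<exists>!w. w \<in> hom C (tgt C r1) (tgt C u) \<and> w \<cdot> r1 = u \<and> w \<cdot> r2 = v"
    using assms by (intro pushout_ex1) (auto simp: in_hom_iff)
  then obtain w where "w \<in> hom C (tgt C r1) (tgt C u)" "w \<cdot> r1 = u" "w \<cdot> r2 = v" by blast
  then show thesis by (intro that) (auto simp: in_hom_iff)
qed

lemma pushout_cancel:
  assumes "is_pushout C a b r1 r2" "w1 \<in> Mor C" "w2 \<in> Mor C" "tgt C w2 = tgt C w1"
    and "src C w1 = tgt C r1" "src C w2 = tgt C r1" "w1 \<cdot> r1 = w2 \<cdot> r1" "w1 \<cdot> r2 = w2 \<cdot> r2"
  shows "w1 = w2"
proof -
  note po = is_pushoutD[OF assms(1)]
  have "(w1 \<cdot> r1) \<cdot> a = w1 \<cdot> (r1 \<cdot> a)"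
    by (rule cmp_assoc[symmetric]) (use assms(2,5) po in auto)
  also have "\<dots> = (w1 \<cdot> r2) \<cdot> b"
    unfolding po(9) by (rule cmp_assoc) (use assms(2,5) po in auto)
  finally have ex1: "\<exists>!w. w \<in> hom C (tgt C r1) (tgt C w1) \<and> w \<cdot> r1 = w1 \<cdot> r1 \<and> w \<cdot> r2 = w1 \<cdot> r2"
    using assms(1,2,5) po by (intro pushout_ex1) (auto simp: in_hom_iff)
  have "w1 \<in> hom C (tgt C r1) (tgt C w1) \<and> w1 \<cdot> r1 = w1 \<cdot> r1 \<and> w1 \<cdot> r2 = w1 \<cdot> r2"
    and "w2 \<in> hom C (tgt C r1) (tgt C w1) \<and> w2 \<cdot> r1 = w1 \<cdot> r1 \<and> w2 \<cdot> r2 = w1 \<cdot> r2"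
    using assms(2-8) by (auto simp: in_hom_iff)
  from this[THEN the1_equality[OF ex1]] show ?thesis by simp
qed

lemma is_pushoutI:
  assumes "a \<in> Mor C" "b \<in> Mor C" "src C a = src C b" "r1 \<in> Mor C" "r2 \<in> Mor C"
    and "tgt C r2 = tgt C r1" "src C r1 = tgt C a" "src C r2 = tgt C b" "r1 \<cdot> a = r2 \<cdot> b"
    and desc: "\<And>u v. u \<in> Mor C \<Longrightarrow> v \<in> Mor C \<Longrightarrow> tgt C v = tgt C u \<Longrightarrow>
      src C u = tgt C a \<Longrightarrow> src C v = tgt C b \<Longrightarrow> u \<cdot> a = v \<cdot> b \<Longrightarrow>
      \<exists>w. w \<in> hom C (tgt C r1) (tgt C u) \<and> w \<cdot> r1 = u \<and> w \<cdot> r2 = v"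
    and cancel: "\<And>w1 w2. w1 \<in> Mor C \<Longrightarrow> w2 \<in> Mor C \<Longrightarrow> tgt C w2 = tgt C w1 \<Longrightarrow>
      src C w1 = tgt C r1 \<Longrightarrow> src C w2 = tgt C r1 \<Longrightarrow> w1 \<cdot> r1 = w2 \<cdot> r1 \<Longrightarrow> w1 \<cdot> r2 = w2 \<cdot> r2 \<Longrightarrow>
      w1 = w2"
  shows "is_pushout C a b r1 r2"
  unfolding is_pushout_def
proof (intro conjI ballI impI)
  show "r1 \<in> hom C (tgt C a) (tgt C r1)" "r2 \<in> hom C (tgt C b) (tgt C r1)"
    using assms(4-8) by (auto simp: in_hom_iff)
  fix T u v assume uv: "T \<in> Ob C" "u \<in> hom C (tgt C a) T" "v \<in> hom C (tgt C b) T" "u \<cdot> a = v \<cdot> b"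
  then obtain w where w: "w \<in> hom C (tgt C r1) T" "w \<cdot> r1 = u" "w \<cdot> r2 = v"
    using desc[of u v] by (auto simp: in_hom_iff)
  show "\<exists>!w. w \<in> hom C (tgt C r1) T \<and> w \<cdot> r1 = u \<and> w \<cdot> r2 = v"
  proof (rule ex1I[of _ w])
    fix w' assume w': "w' \<in> hom C (tgt C r1) T \<and> w' \<cdot> r1 = u \<and> w' \<cdot> r2 = v"
    show "w' = w" by (rule cancel) (use w w' in \<open>auto simp: in_hom_iff\<close>)
  qed (use w in blast)
qed (use assms(1-3,9) in auto)

lemma kernels_iso:
  assumes k: "is_kernel C k d" and k': "is_kernel C k' d"
  obtains a where "iso C a" "src C a = src C k" "tgt C a = src C k'" "k' \<cdot> a = k"
proof -
  note ty = is_kernelD[OF k] is_kernelD[OF k']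
  obtain a where a: "a \<in> Mor C" "src C a = src C k" "tgt C a = src C k'" "k' \<cdot> a = k"
    by (rule kernel_lift[OF k', of k]) (use ty in auto)
  obtain b where b: "b \<in> Mor C" "src C b = src C k'" "tgt C b = src C k" "k \<cdot> b = k'"
    by (rule kernel_lift[OF k, of k']) (use ty in auto)
  have "b \<cdot> a = idm C (src C k)"
  proof (rule kernel_cancel[OF k])
    have "k \<cdot> (b \<cdot> a) = (k \<cdot> b) \<cdot> a" by (rule cmp_assoc) (use a b ty in auto)
    then show "k \<cdot> (b \<cdot> a) = k \<cdot> idm C (src C k)" using a b ty by simp
  qed (use a b ty in auto)
  moreover have "a \<cdot> b = idm C (src C k')"
  proof (rule kernel_cancel[OF k'])
    have "k' \<cdot> (a \<cdot> b) = (k' \<cdot> a) \<cdot> b" by (rule cmp_assoc) (use a b ty in auto)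
    then show "k' \<cdot> (a \<cdot> b) = k' \<cdot> idm C (src C k')" using a b ty by simp
  qed (use a b ty in auto)
  ultimately have "iso C a" using a b by (intro isoI[of a b]) auto
  with a show thesis by (intro that) auto
qed

lemma cokernels_iso:
  assumes d: "is_cokernel C d k" and d': "is_cokernel C d' k"
  obtains c where "iso C c" "src C c = tgt C d" "tgt C c = tgt C d'" "c \<cdot> d = d'"
proof -
  note ty = is_cokernelD[OF d] is_cokernelD[OF d']
  obtain c where c: "c \<in> Mor C" "src C c = tgt C d" "tgt C c = tgt C d'" "c \<cdot> d = d'"
    by (rule cokernel_desc[OF d, of d']) (use ty in auto)
  obtain e where e: "e \<in> Mor C" "src C e = tgt C d'" "tgt C e = tgt C d" "e \<cdot> d' = d"
    by (rule cokernel_desc[OF d', of d]) (use ty in auto)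
  have "e \<cdot> c = idm C (tgt C d)"
  proof (rule cokernel_cancel[OF d])
    have "(e \<cdot> c) \<cdot> d = e \<cdot> (c \<cdot> d)" by (rule cmp_assoc[symmetric]) (use c e ty in auto)
    then show "(e \<cdot> c) \<cdot> d = idm C (tgt C d) \<cdot> d" using c e ty by simp
  qed (use c e ty in auto)
  moreover have "c \<cdot> e = idm C (tgt C d')"
  proof (rule cokernel_cancel[OF d'])
    have "(c \<cdot> e) \<cdot> d' = c \<cdot> (e \<cdot> d')" by (rule cmp_assoc[symmetric]) (use c e ty in auto)
    then show "(c \<cdot> e) \<cdot> d' = idm C (tgt C d') \<cdot> d'" using c e ty by simp
  qed (use c e ty in auto)
  ultimately have "iso C c" using c e by (intro isoI[of c e]) auto
  with c show thesis by (intro that) auto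
qed

lemma pullback_kernel:
  assumes pb: "is_pullback C f p q1 q2" and k: "is_kernel C k p"
  obtains \<kappa> where "is_kernel C \<kappa> q1" "q2 \<cdot> \<kappa> = k" "src C \<kappa> = src C k"
proof -
  note ty = is_pullbackD[OF pb] is_kernelD[OF k]
  obtain \<kappa> where \<kappa>: "\<kappa> \<in> Mor C" "src C \<kappa> = src C k" "tgt C \<kappa> = src C q1"
      "q1 \<cdot> \<kappa> = \<zero>\<^bsub>src C k,src C f\<^esub>" "q2 \<cdot> \<kappa> = k"
    by (rule pullback_lift[OF pb, of "\<zero>\<^bsub>src C k,src C f\<^esub>" k]) (use ty in auto)
  have "is_kernel C \<kappa> q1"
  proof (rule is_kernelI)
    fix h assume h: "h \<in> Mor C" "tgt C h = src C q1" "q1 \<cdot> h = \<zero>\<^bsub>src C h,tgt C q1\<^esub>"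
    have "p \<cdot> (q2 \<cdot> h) = (f \<cdot> q1) \<cdot> h"
      unfolding ty(9) by (rule cmp_assoc) (use h ty in auto)
    also have "\<dots> = f \<cdot> (q1 \<cdot> h)" by (rule cmp_assoc[symmetric]) (use h ty in auto)
    also have "\<dots> = \<zero>\<^bsub>src C (q2 \<cdot> h),tgt C p\<^esub>" using h ty by simp
    finally have z: "p \<cdot> (q2 \<cdot> h) = \<zero>\<^bsub>src C (q2 \<cdot> h),tgt C p\<^esub>" .
    obtain s where s: "s \<in> Mor C" "src C s = src C h" "tgt C s = src C k" "k \<cdot> s = q2 \<cdot> h"
      by (rule kernel_lift[OF k, of "q2 \<cdot> h"]) (use z h ty in auto)
    have "\<kappa> \<cdot> s = h"
    proof (rule pullback_cancel[OF pb])
      have "q1 \<cdot> (\<kappa> \<cdot> s) = (q1 \<cdot> \<kappa>) \<cdot> s" by (rule cmp_assoc) (use \<kappa> s ty in auto)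
      then show "q1 \<cdot> (\<kappa> \<cdot> s) = q1 \<cdot> h" using \<kappa> s h ty by simp
      have "q2 \<cdot> (\<kappa> \<cdot> s) = (q2 \<cdot> \<kappa>) \<cdot> s" by (rule cmp_assoc) (use \<kappa> s ty in auto)
      then show "q2 \<cdot> (\<kappa> \<cdot> s) = q2 \<cdot> h" using \<kappa> s by simp
    qed (use \<kappa> s h ty in auto)
    then show "\<exists>u. u \<in> hom C (src C h) (src C \<kappa>) \<and> \<kappa> \<cdot> u = h"
      using \<kappa> s by (auto simp: in_hom_iff)
  next
    fix u1 u2 assume u: "u1 \<in> Mor C" "u2 \<in> Mor C" "src C u2 = src C u1" "tgt C u1 = src C \<kappa>"
      "tgt C u2 = src C \<kappa>" "\<kappa> \<cdot> u1 = \<kappa> \<cdot> u2"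
    show "u1 = u2"
    proof (rule kernel_cancel[OF k])
      have "k \<cdot> u1 = q2 \<cdot> (\<kappa> \<cdot> u1)"
        unfolding \<kappa>(5)[symmetric] by (rule cmp_assoc[symmetric]) (use \<kappa> u ty in auto)
      also have "\<dots> = k \<cdot> u2"
        unfolding u(6) \<kappa>(5)[symmetric] by (rule cmp_assoc) (use \<kappa> u ty in auto)
      finally show "k \<cdot> u1 = k \<cdot> u2" .
    qed (use \<kappa> u in auto)
  qed (use \<kappa> ty in auto)
  with \<kappa> show thesis by (intro that[of \<kappa>]) auto
qed

lemma kernel_pullback_cmp:
  assumes k: "is_kernel C k q" and pb: "is_pullback C k \<psi> r1 r2"
  shows "is_kernel C r2 (q \<cdot> \<psi>)"
proof -
  note ty = is_kernelD[OF k] is_pullbackD[OF pb]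
  have sq: "k \<cdot> (r1 \<cdot> u) = \<psi> \<cdot> (r2 \<cdot> u)" if "u \<in> Mor C" "tgt C u = src C r1" for u
  proof -
    have "k \<cdot> (r1 \<cdot> u) = (k \<cdot> r1) \<cdot> u" by (rule cmp_assoc) (use that ty in auto)
    also have "\<dots> = \<psi> \<cdot> (r2 \<cdot> u)" unfolding ty(13) by (rule cmp_assoc[symmetric]) (use that ty in auto)
    finally show ?thesis .
  qed
  show ?thesis
  proof (rule is_kernelI)
    have "(q \<cdot> \<psi>) \<cdot> r2 = q \<cdot> (k \<cdot> r1)"
      unfolding ty(13) by (rule cmp_assoc[symmetric]) (use ty in auto)
    also have "\<dots> = (q \<cdot> k) \<cdot> r1" by (rule cmp_assoc) (use ty in auto)
    also have "\<dots> = \<zero>\<^bsub>src C r2,tgt C (q \<cdot> \<psi>)\<^esub>" using ty by simp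
    finally show "(q \<cdot> \<psi>) \<cdot> r2 = \<zero>\<^bsub>src C r2,tgt C (q \<cdot> \<psi>)\<^esub>" .
  next
    fix h assume h: "h \<in> Mor C" "tgt C h = src C (q \<cdot> \<psi>)" "(q \<cdot> \<psi>) \<cdot> h = \<zero>\<^bsub>src C h,tgt C (q \<cdot> \<psi>)\<^esub>"
    have "q \<cdot> (\<psi> \<cdot> h) = (q \<cdot> \<psi>) \<cdot> h" by (rule cmp_assoc) (use h ty in auto)
    then have z: "q \<cdot> (\<psi> \<cdot> h) = \<zero>\<^bsub>src C (\<psi> \<cdot> h),tgt C q\<^esub>" using h ty by simp
    obtain s where s: "s \<in> Mor C" "src C s = src C h" "tgt C s = src C k" "k \<cdot> s = \<psi> \<cdot> h"
      by (rule kernel_lift[OF k, of "\<psi> \<cdot> h"]) (use z h ty in auto)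
    obtain w where "w \<in> Mor C" "src C w = src C s" "tgt C w = src C r1" "r1 \<cdot> w = s" "r2 \<cdot> w = h"
      by (rule pullback_lift[OF pb, of s h]) (use s h ty in auto)
    then show "\<exists>u. u \<in> hom C (src C h) (src C r2) \<and> r2 \<cdot> u = h"
      using s ty by (auto simp: in_hom_iff)
  next
    fix u1 u2 assume u: "u1 \<in> Mor C" "u2 \<in> Mor C" "src C u2 = src C u1" "tgt C u1 = src C r2"
      "tgt C u2 = src C r2" "r2 \<cdot> u1 = r2 \<cdot> u2"
    have "k \<cdot> (r1 \<cdot> u1) = k \<cdot> (r1 \<cdot> u2)"
      using sq[of u1] sq[of u2] u ty by simp
    then have "r1 \<cdot> u1 = r1 \<cdot> u2"
      by (rule kernel_cancel[OF k, rotated -1]) (use u ty in auto)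
    then show "u1 = u2" by (rule pullback_cancel[OF pb, rotated -2]) (use u ty in auto)
  qed (use ty in auto)
qed

lemma pushout_cokernel:
  assumes y: "is_cokernel C y x" and po: "is_pushout C x f p i"
    and c: "c \<in> Mor C" "src C c = tgt C p" "c \<cdot> p = y" "c \<cdot> i = \<zero>\<^bsub>src C i,tgt C y\<^esub>"
  shows "is_cokernel C c i"
proof -
  note ty = is_cokernelD[OF y] is_pushoutD[OF po]
  have "tgt C (c \<cdot> p) = tgt C c" by (rule cmp_tgt) (use c ty in auto)
  then have tc: "tgt C c = tgt C y" unfolding c(3) ..
  show ?thesis
  proof (rule is_cokernelI)
    fix t assume t: "t \<in> Mor C" "src C t = tgt C i" "t \<cdot> i = \<zero>\<^bsub>src C i,tgt C t\<^esub>"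
    have "(t \<cdot> p) \<cdot> x = t \<cdot> (i \<cdot> f)"
      unfolding ty(13)[symmetric] by (rule cmp_assoc[symmetric]) (use t ty in auto)
    also have "\<dots> = (t \<cdot> i) \<cdot> f" by (rule cmp_assoc) (use t ty in auto)
    also have "\<dots> = \<zero>\<^bsub>src C x,tgt C (t \<cdot> p)\<^esub>" using t ty by simp
    finally have z: "(t \<cdot> p) \<cdot> x = \<zero>\<^bsub>src C x,tgt C (t \<cdot> p)\<^esub>" .
    obtain s where s: "s \<in> Mor C" "src C s = tgt C y" "tgt C s = tgt C t" "s \<cdot> y = t \<cdot> p"
      by (rule cokernel_desc[OF y, of "t \<cdot> p"]) (use z t ty in auto)
    have "s \<cdot> c = t"
    proof (rule pushout_cancel[OF po])
      have "(s \<cdot> c) \<cdot> p = s \<cdot> (c \<cdot> p)" by (rule cmp_assoc[symmetric]) (use s c ty tc in auto)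
      then show "(s \<cdot> c) \<cdot> p = t \<cdot> p" using s c by simp
      have "(s \<cdot> c) \<cdot> i = s \<cdot> (c \<cdot> i)" by (rule cmp_assoc[symmetric]) (use s c ty tc in auto)
      then show "(s \<cdot> c) \<cdot> i = t \<cdot> i" using s c t ty by simp
    qed (use s c(1,2) t ty tc in auto)
    then show "\<exists>u. u \<in> hom C (tgt C c) (tgt C t) \<and> u \<cdot> c = t"
      using s tc by (auto simp: in_hom_iff)
  next
    fix u1 u2 assume u: "u1 \<in> Mor C" "u2 \<in> Mor C" "tgt C u2 = tgt C u1" "src C u1 = tgt C c"
      "src C u2 = tgt C c" "u1 \<cdot> c = u2 \<cdot> c"
    show "u1 = u2"
    proof (rule cokernel_cancel[OF y])
      have "u1 \<cdot> y = (u1 \<cdot> c) \<cdot> p" unfolding c(3)[symmetric] by (rule cmp_assoc) (use u c ty tc in auto)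
      also have "\<dots> = u2 \<cdot> y"
        unfolding u(6) c(3)[symmetric] by (rule cmp_assoc[symmetric]) (use u c ty tc in auto)
      finally show "u1 \<cdot> y = u2 \<cdot> y" .
    qed (use u tc in auto)
  qed (use c ty tc in auto)
qed

lemma kernel_of_map_between_kernels:
  assumes x: "is_kernel C x y" and k: "is_kernel C k q" and f': "is_kernel C f' f"
    and f: "src C f = src C x" "tgt C f = src C k"
    and \<psi>: "\<psi> \<in> Mor C" "src C \<psi> = tgt C x" "tgt C \<psi> = src C q" "q \<cdot> \<psi> = y" "\<psi> \<cdot> x = k \<cdot> f"
  shows "is_kernel C (x \<cdot> f') \<psi>"
proof -
  note ty = is_kernelD[OF x] is_kernelD[OF k] is_kernelD[OF f'] f \<psi>
  have "tgt C (q \<cdot> \<psi>) = tgt C q" by (rule cmp_tgt) (use \<psi>(1,3) is_kernelD[OF k] in auto)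
  then have ty_y: "tgt C y = tgt C q" unfolding \<psi>(4) .
  note ty = ty ty_y
  show ?thesis
  proof (rule is_kernelI)
    have "\<psi> \<cdot> (x \<cdot> f') = (k \<cdot> f) \<cdot> f'" unfolding \<psi>(5)[symmetric] by (rule cmp_assoc) (use ty in auto)
    also have "\<dots> = k \<cdot> (f \<cdot> f')" by (rule cmp_assoc[symmetric]) (use ty in auto)
    also have "\<dots> = \<zero>\<^bsub>src C (x \<cdot> f'),tgt C \<psi>\<^esub>" using ty by simp
    finally show "\<psi> \<cdot> (x \<cdot> f') = \<zero>\<^bsub>src C (x \<cdot> f'),tgt C \<psi>\<^esub>" .
  next
    fix t assume t: "t \<in> Mor C" "tgt C t = src C \<psi>" "\<psi> \<cdot> t = \<zero>\<^bsub>src C t,tgt C \<psi>\<^esub>"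
    have "y \<cdot> t = q \<cdot> (\<psi> \<cdot> t)" unfolding \<psi>(4)[symmetric] by (rule cmp_assoc[symmetric]) (use t ty in auto)
    then have z: "y \<cdot> t = \<zero>\<^bsub>src C t,tgt C y\<^esub>" using t ty by simp
    obtain s where s: "s \<in> Mor C" "src C s = src C t" "tgt C s = src C x" "x \<cdot> s = t"
      by (rule kernel_lift[OF x, of t]) (use z t ty in auto)
    have "k \<cdot> (f \<cdot> s) = (\<psi> \<cdot> x) \<cdot> s" unfolding \<psi>(5) by (rule cmp_assoc) (use s ty in auto)
    also have "\<dots> = \<psi> \<cdot> t" unfolding s(4)[symmetric] by (rule cmp_assoc[symmetric]) (use s ty in auto)
    also have "\<dots> = k \<cdot> \<zero>\<^bsub>src C s,src C k\<^esub>" using s t ty by simp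
    finally have z: "f \<cdot> s = \<zero>\<^bsub>src C s,src C k\<^esub>"
      by (rule kernel_cancel[OF k, rotated -1]) (use s(1,3) ty(5,10,13,14) in auto)
    obtain r where r: "r \<in> Mor C" "src C r = src C s" "tgt C r = src C f'" "f' \<cdot> r = s"
      by (rule kernel_lift[OF f', of s]) (use z s(1,3) f in auto)
    have "(x \<cdot> f') \<cdot> r = x \<cdot> (f' \<cdot> r)" by (rule cmp_assoc[symmetric]) (use r ty(1,9,11,13) in auto)
    then have "(x \<cdot> f') \<cdot> r = t" unfolding r(4) s(4) .
    moreover have "r \<in> hom C (src C t) (src C (x \<cdot> f'))" using r s ty(1,9,11,13) by (simp add: in_hom_iff)
    ultimately show "\<exists>u. u \<in> hom C (src C t) (src C (x \<cdot> f')) \<and> (x \<cdot> f') \<cdot> u = t" by blast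
  next
    fix u1 u2 assume u: "u1 \<in> Mor C" "u2 \<in> Mor C" "src C u2 = src C u1" "tgt C u1 = src C (x \<cdot> f')"
      "tgt C u2 = src C (x \<cdot> f')" "(x \<cdot> f') \<cdot> u1 = (x \<cdot> f') \<cdot> u2"
    have "x \<cdot> (f' \<cdot> u1) = (x \<cdot> f') \<cdot> u1" by (rule cmp_assoc) (use u ty in auto)
    also have "\<dots> = x \<cdot> (f' \<cdot> u2)" unfolding u(6) by (rule cmp_assoc[symmetric]) (use u ty in auto)
    finally have "x \<cdot> (f' \<cdot> u1) = x \<cdot> (f' \<cdot> u2)" .
    then have "f' \<cdot> u1 = f' \<cdot> u2" by (rule kernel_cancel[OF x, rotated -1]) (use u ty in auto)
    then show "u1 = u2" by (rule kernel_cancel[OF f', rotated -1]) (use u ty in auto)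
  qed (use ty in auto)
qed

lemma kernel_map_square_pullback:
  assumes x'': "is_kernel C x'' r1" and x: "is_kernel C x y" and h'': "is_kernel C h'' h"
    and f'': "f'' \<in> hom C (src C x'') (src C x)" and r2: "r2 \<in> hom C (tgt C x'') (tgt C x)"
    and r1: "tgt C r1 = src C h''"
    and sq1: "x \<cdot> f'' = r2 \<cdot> x''" and sq2: "y \<cdot> r2 = h'' \<cdot> r1"
  shows "is_pullback C x r2 f'' x''"
proof -
  note ty = is_kernelD[OF x''] is_kernelD[OF x] is_kernelD[OF h''] f''[unfolded in_hom_iff]
    r2[unfolded in_hom_iff] r1
  have "tgt C (y \<cdot> r2) = tgt C (h'' \<cdot> r1)" unfolding sq2 ..
  then have ty_y: "tgt C y = tgt C h''" using ty by simp
  note ty = ty ty_y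
  show ?thesis
  proof (rule is_pullbackI)
    fix u v assume uv: "u \<in> Mor C" "v \<in> Mor C" "src C v = src C u" "tgt C u = src C x"
      "tgt C v = src C r2" "x \<cdot> u = r2 \<cdot> v"
    have "h'' \<cdot> (r1 \<cdot> v) = (y \<cdot> r2) \<cdot> v" unfolding sq2 by (rule cmp_assoc) (use uv ty in auto)
    also have "\<dots> = y \<cdot> (x \<cdot> u)" unfolding uv(6) by (rule cmp_assoc[symmetric]) (use uv ty in auto)
    also have "\<dots> = (y \<cdot> x) \<cdot> u" by (rule cmp_assoc) (use uv ty in auto)
    also have "\<dots> = h'' \<cdot> \<zero>\<^bsub>src C v,src C h''\<^esub>" using uv ty by simp
    finally have z: "r1 \<cdot> v = \<zero>\<^bsub>src C v,src C h''\<^esub>"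
      by (rule kernel_cancel[OF h'', rotated -1]) (use uv ty in auto)
    obtain w where w: "w \<in> Mor C" "src C w = src C v" "tgt C w = src C x''" "x'' \<cdot> w = v"
      by (rule kernel_lift[OF x'', of v]) (use z uv ty in auto)
    have "x \<cdot> (f'' \<cdot> w) = (r2 \<cdot> x'') \<cdot> w" unfolding sq1[symmetric] by (rule cmp_assoc) (use w ty in auto)
    also have "\<dots> = x \<cdot> u" unfolding uv(6) w(4)[symmetric] by (rule cmp_assoc[symmetric]) (use w ty in auto)
    finally have "f'' \<cdot> w = u" by (rule kernel_cancel[OF x, rotated -1]) (use uv w ty in auto)
    then show "\<exists>w. w \<in> hom C (src C u) (src C f'') \<and> f'' \<cdot> w = u \<and> x'' \<cdot> w = v"
      using w uv ty by (auto simp: in_hom_iff)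
  next
    fix w1 w2 assume w: "w1 \<in> Mor C" "w2 \<in> Mor C" "src C w2 = src C w1" "tgt C w1 = src C f''"
      "tgt C w2 = src C f''" "f'' \<cdot> w1 = f'' \<cdot> w2" "x'' \<cdot> w1 = x'' \<cdot> w2"
    show "w1 = w2" by (rule kernel_cancel[OF x'']) (use w ty in auto)
  qed (use ty sq1 in auto)
qed

lemma cokernel_map_square_pushout:
  assumes y: "is_cokernel C y x" and y': "is_cokernel C y' x'" and f: "is_cokernel C f f''"
    and f_hom: "f \<in> hom C (src C x) (src C x')" and g: "g \<in> hom C (tgt C x) (tgt C x')"
    and h: "h \<in> hom C (tgt C y) (tgt C y')"
    and sq1: "g \<cdot> x = x' \<cdot> f" and sq2: "h \<cdot> y = y' \<cdot> g"
  shows "is_pushout C y g h y'"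
proof -
  note ty = is_cokernelD[OF y] is_cokernelD[OF y'] is_cokernelD[OF f] f_hom[unfolded in_hom_iff]
    g[unfolded in_hom_iff] h[unfolded in_hom_iff]
  show ?thesis
  proof (rule is_pushoutI)
    fix u v assume uv: "u \<in> Mor C" "v \<in> Mor C" "tgt C v = tgt C u" "src C u = tgt C y"
      "src C v = tgt C g" "u \<cdot> y = v \<cdot> g"
    have "(v \<cdot> x') \<cdot> f = v \<cdot> (g \<cdot> x)" unfolding sq1 by (rule cmp_assoc[symmetric]) (use uv ty in auto)
    also have "\<dots> = (u \<cdot> y) \<cdot> x" unfolding uv(6) by (rule cmp_assoc) (use uv ty in auto)
    also have "\<dots> = u \<cdot> (y \<cdot> x)" by (rule cmp_assoc[symmetric]) (use uv ty in auto)
    also have "\<dots> = \<zero>\<^bsub>src C x',tgt C v\<^esub> \<cdot> f" using uv ty by simp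
    finally have z: "v \<cdot> x' = \<zero>\<^bsub>src C x',tgt C v\<^esub>"
      by (rule cokernel_cancel[OF f, rotated -1]) (use uv ty in auto)
    obtain w where w: "w \<in> Mor C" "src C w = tgt C y'" "tgt C w = tgt C v" "w \<cdot> y' = v"
      by (rule cokernel_desc[OF y', of v]) (use z uv ty in auto)
    have "(w \<cdot> h) \<cdot> y = w \<cdot> (y' \<cdot> g)" unfolding sq2[symmetric] by (rule cmp_assoc[symmetric]) (use w ty in auto)
    also have "\<dots> = u \<cdot> y" unfolding uv(6) w(4)[symmetric] by (rule cmp_assoc) (use w ty in auto)
    finally have "w \<cdot> h = u" by (rule cokernel_cancel[OF y, rotated -1]) (use uv w ty in auto)
    then show "\<exists>w. w \<in> hom C (tgt C h) (tgt C u) \<and> w \<cdot> h = u \<and> w \<cdot> y' = v"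
      using w uv ty by (auto simp: in_hom_iff)
  next
    fix w1 w2 assume w: "w1 \<in> Mor C" "w2 \<in> Mor C" "tgt C w2 = tgt C w1" "src C w1 = tgt C h"
      "src C w2 = tgt C h" "w1 \<cdot> h = w2 \<cdot> h" "w1 \<cdot> y' = w2 \<cdot> y'"
    show "w1 = w2" by (rule cokernel_cancel[OF y']) (use w ty in auto)
  qed (use ty sq2 in auto)
qed

lemma cokernel_splitting:
  assumes r: "is_cokernel C r \<kappa>" and m: "m \<in> Mor C" "src C m = tgt C \<kappa>" "m \<cdot> \<kappa> = idm C (src C \<kappa>)"
  obtains s where "s \<in> Mor C" "src C s = tgt C r" "tgt C s = tgt C \<kappa>" "r \<cdot> s = idm C (tgt C r)"
    "m \<cdot> s = \<zero>\<^bsub>tgt C r,tgt C m\<^esub>" "s \<cdot> r \<oplus> \<kappa> \<cdot> m = idm C (tgt C \<kappa>)"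
proof -
  note ty = is_cokernelD[OF r] m
  have tm: "tgt C m = src C \<kappa>" using m ty by (metis cmp_tgt idm_tgt Mor_src_Ob)
  define e where "e = idm C (tgt C \<kappa>) \<oplus> \<ominus> (\<kappa> \<cdot> m)"
  have te: "e \<in> Mor C" "src C e = tgt C \<kappa>" "tgt C e = tgt C \<kappa>" unfolding e_def using ty tm by auto
  have \<kappa>m\<kappa>: "(\<kappa> \<cdot> m) \<cdot> \<kappa> = \<kappa>"
    using cmp_assoc[of \<kappa> m \<kappa>] ty tm by simp
  have "e \<cdot> \<kappa> = \<kappa> \<oplus> \<ominus> \<kappa>"
    unfolding e_def using ty tm \<kappa>m\<kappa> by (simp add: cmp_madd_left cmp_mneg_left)
  then have z: "e \<cdot> \<kappa> = \<zero>\<^bsub>src C \<kappa>,tgt C e\<^esub>" using ty te by (simp add: madd_mneg_right)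
  obtain s where s: "s \<in> Mor C" "src C s = tgt C r" "tgt C s = tgt C \<kappa>" "s \<cdot> r = e"
    by (rule cokernel_desc[OF r, of e]) (use z te in auto)
  have r\<kappa>m: "r \<cdot> (\<kappa> \<cdot> m) = \<zero>\<^bsub>tgt C \<kappa>,tgt C r\<^esub>"
    using cmp_assoc[of m \<kappa> r] ty tm by simp
  have "(r \<cdot> s) \<cdot> r = r \<cdot> e" unfolding s(4)[symmetric] by (rule cmp_assoc[symmetric]) (use s ty in auto)
  also have "\<dots> = r" unfolding e_def using ty tm r\<kappa>m by (simp add: cmp_madd_right cmp_mneg_right)
  also have "\<dots> = idm C (tgt C r) \<cdot> r" using ty by simp
  finally have rs: "r \<cdot> s = idm C (tgt C r)"
    by (rule cokernel_cancel[OF r, rotated -1]) (use s ty in auto)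
  have m\<kappa>m: "m \<cdot> (\<kappa> \<cdot> m) = m"
    using cmp_assoc[of m \<kappa> m] ty tm by simp
  have "(m \<cdot> s) \<cdot> r = m \<cdot> e" unfolding s(4)[symmetric] by (rule cmp_assoc[symmetric]) (use s ty in auto)
  also have "\<dots> = \<zero>\<^bsub>tgt C r,tgt C m\<^esub> \<cdot> r"
    unfolding e_def using ty tm m\<kappa>m by (simp add: cmp_madd_right cmp_mneg_right madd_mneg_right)
  finally have ms: "m \<cdot> s = \<zero>\<^bsub>tgt C r,tgt C m\<^esub>"
    by (rule cokernel_cancel[OF r, rotated -1]) (use s ty tm in auto)
  have "s \<cdot> r \<oplus> \<kappa> \<cdot> m = idm C (tgt C \<kappa>) \<oplus> (\<ominus> (\<kappa> \<cdot> m) \<oplus> \<kappa> \<cdot> m)"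
    unfolding s(4) e_def by (rule madd_assoc) (use ty tm in auto)
  also have "\<dots> = idm C (tgt C \<kappa>)" using ty tm by (simp add: madd_mneg_left)
  finally show thesis using s rs ms by (intro that[of s]) auto
qed

text \<open>The difference \<open>\<theta> \<circ> r2 - r1\<close> is killed by \<open>d'\<close>, so it factors through its kernel.\<close>

lemma pullback_retraction:
  assumes k': "is_kernel C k' d'" and pb: "is_pullback C d' d r1 r2"
    and \<theta>: "\<theta> \<in> Mor C" "src C \<theta> = src C d" "tgt C \<theta> = src C d'" "d' \<cdot> \<theta> = d"
    and \<kappa>: "\<kappa> \<in> Mor C" "tgt C \<kappa> = src C r1" "r1 \<cdot> \<kappa> = \<zero>\<^bsub>src C \<kappa>,tgt C r1\<^esub>" "\<theta> \<cdot> (r2 \<cdot> \<kappa>) = k'"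
    and \<sigma>: "\<sigma> \<in> Mor C" "src C \<sigma> = src C d" "tgt C \<sigma> = src C r1" "r1 \<cdot> \<sigma> = \<theta>" "r2 \<cdot> \<sigma> = idm C (src C d)"
  obtains m where "m \<in> Mor C" "src C m = src C r1" "tgt C m = src C k'" "\<theta> \<cdot> r2 = k' \<cdot> m \<oplus> r1"
    "m \<cdot> \<kappa> = idm C (src C \<kappa>)" "m \<cdot> \<sigma> = \<zero>\<^bsub>src C d,src C k'\<^esub>"
proof -
  note r = is_pullbackD[OF pb] and tk = is_kernelD[OF k']
  note ty = r(1-8) tk(1-3) \<theta>(1-3) \<kappa>(1-2) \<sigma>(1-3)
  have "src C (\<theta> \<cdot> (r2 \<cdot> \<kappa>)) = src C \<kappa>" using ty by simp
  then have src_k': "src C k' = src C \<kappa>" unfolding \<kappa>(4) .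
  define \<delta> where "\<delta> = \<theta> \<cdot> r2 \<oplus> \<ominus> r1"
  have "d' \<cdot> \<delta> = (d' \<cdot> \<theta>) \<cdot> r2 \<oplus> \<ominus> (d' \<cdot> r1)"
    unfolding \<delta>_def using ty by (simp add: cmp_madd_right cmp_mneg_right cmp_assoc)
  also have "\<dots> = \<zero>\<^bsub>src C r1,tgt C d'\<^esub>"
    using ty by (simp add: \<theta>(4) r(9) madd_mneg_right)
  finally have z: "d' \<cdot> \<delta> = \<zero>\<^bsub>src C r1,tgt C d'\<^esub>" .
  obtain m where m: "m \<in> Mor C" "src C m = src C r1" "tgt C m = src C k'" "k' \<cdot> m = \<delta>"
    by (rule kernel_lift[OF k', of \<delta>]) (use z ty in \<open>auto simp: \<delta>_def\<close>)
  note ty = ty m(1-3)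
  have "k' \<cdot> m \<oplus> r1 = \<theta> \<cdot> r2 \<oplus> (\<ominus> r1 \<oplus> r1)"
    unfolding m(4) \<delta>_def by (rule madd_assoc) (use ty in auto)
  then have \<theta>r2: "\<theta> \<cdot> r2 = k' \<cdot> m \<oplus> r1" using ty by (simp add: madd_mneg_left)
  have "k' \<cdot> (m \<cdot> \<kappa>) = (k' \<cdot> m) \<cdot> \<kappa>" by (rule cmp_assoc) (use ty in auto)
  also have "\<dots> = (\<theta> \<cdot> r2) \<cdot> \<kappa> \<oplus> \<ominus> (r1 \<cdot> \<kappa>)"
    unfolding m(4) \<delta>_def using ty by (simp add: cmp_madd_left cmp_mneg_left)
  also have "(\<theta> \<cdot> r2) \<cdot> \<kappa> = k'" unfolding \<kappa>(4)[symmetric] by (rule cmp_assoc[symmetric]) (use ty in auto)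
  also have "k' \<oplus> \<ominus> (r1 \<cdot> \<kappa>) = k' \<cdot> idm C (src C \<kappa>)" using ty \<kappa>(3) src_k' by simp
  finally have m\<kappa>: "m \<cdot> \<kappa> = idm C (src C \<kappa>)"
    by (rule kernel_cancel[OF k', rotated -1]) (use ty src_k' in auto)
  have "k' \<cdot> (m \<cdot> \<sigma>) = (k' \<cdot> m) \<cdot> \<sigma>" by (rule cmp_assoc) (use ty in auto)
  also have "\<dots> = (\<theta> \<cdot> r2) \<cdot> \<sigma> \<oplus> \<ominus> (r1 \<cdot> \<sigma>)"
    unfolding m(4) \<delta>_def using ty by (simp add: cmp_madd_left cmp_mneg_left)
  also have "(\<theta> \<cdot> r2) \<cdot> \<sigma> = \<theta> \<cdot> (r2 \<cdot> \<sigma>)" by (rule cmp_assoc[symmetric]) (use ty in auto)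
  also have "\<theta> \<cdot> (r2 \<cdot> \<sigma>) \<oplus> \<ominus> (r1 \<cdot> \<sigma>) = k' \<cdot> \<zero>\<^bsub>src C d,src C k'\<^esub>"
    using ty by (simp add: \<sigma>(4,5) madd_mneg_right)
  finally have "m \<cdot> \<sigma> = \<zero>\<^bsub>src C d,src C k'\<^esub>"
    by (rule kernel_cancel[OF k', rotated -1]) (use ty in auto)
  with m \<theta>r2 m\<kappa> show thesis by (intro that[of m]) auto
qed

end

section \<open>Conflation categories\<close>

locale conflation_cat =
  fixes C :: "('o, 'm, 'x) addcat_scheme" and Cf :: "('m \<times> 'm) set"
  assumes conflation_category: "conflation_category C Cf"

sublocale conflation_cat \<subseteq> preadditive_cat C
  using conflation_category additive_imp_preadditive unfolding conflation_category_def by blast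

context conflation_cat
begin

lemma conflationD:
  assumes "(k, d) \<in> Cf"
  shows "is_kernel C k d" "is_cokernel C d k"
proof -
  have "\<forall>(f, g)\<in>Cf. kc_pair C f g"
    using conflation_category unfolding conflation_category_def by (elim conjE) assumption
  then show "is_kernel C k d" "is_cokernel C d k"
    using assms unfolding kc_pair_def by blast+
qed

lemma conflation_iso_closed:
  assumes "(f, g) \<in> Cf" "f' \<in> Mor C" "g' \<in> Mor C" "tgt C f' = src C g'"
    and "iso C a" "iso C b" "iso C c" "src C a = src C f" "tgt C a = src C f'"
    and "src C b = tgt C f" "tgt C b = tgt C f'" "src C c = tgt C g" "tgt C c = tgt C g'"
    and "b \<cdot> f = f' \<cdot> a" "c \<cdot> g = g' \<cdot> b"
  shows "(f', g') \<in> Cf"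
proof -
  have "\<forall>f g f' g' a b c. (f, g) \<in> Cf \<longrightarrow> f' \<in> Mor C \<longrightarrow> g' \<in> Mor C \<longrightarrow>
      tgt C f' = src C g' \<longrightarrow> iso C a \<longrightarrow> iso C b \<longrightarrow> iso C c \<longrightarrow>
      src C a = src C f \<longrightarrow> tgt C a = src C f' \<longrightarrow>
      src C b = tgt C f \<longrightarrow> tgt C b = tgt C f' \<longrightarrow>
      src C c = tgt C g \<longrightarrow> tgt C c = tgt C g' \<longrightarrow>
      b \<cdot> f = f' \<cdot> a \<longrightarrow> c \<cdot> g = g' \<cdot> b \<longrightarrow> (f', g') \<in> Cf"
    using conflation_category unfolding conflation_category_def by (elim conjE) assumption
  then show ?thesis using assms by blast
qed

lemma iso_Mor: "iso C t \<Longrightarrow> t \<in> Mor C"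
  unfolding iso_def by blast

lemma kernel_conflation:
  assumes d: "deflation Cf d" and k: "is_kernel C k d"
  shows "(k, d) \<in> Cf"
proof -
  obtain k0 where k0: "(k0, d) \<in> Cf" using d unfolding deflation_def by blast
  note ty = is_kernelD[OF k] is_kernelD[OF conflationD(1)[OF k0]]
  obtain a where a: "iso C a" "src C a = src C k0" "tgt C a = src C k" "k \<cdot> a = k0"
    by (rule kernels_iso[OF conflationD(1)[OF k0] k])
  show ?thesis
    by (rule conflation_iso_closed[OF k0, where a = a and b = "idm C (src C d)" and c = "idm C (tgt C d)"])
      (use a ty iso_idm in auto)
qed

lemma cokernel_conflation:
  assumes k: "inflation Cf k" and d: "is_cokernel C d k"
  shows "(k, d) \<in> Cf"
proof -
  obtain d0 where d0: "(k, d0) \<in> Cf" using k unfolding inflation_def by blast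
  note ty = is_cokernelD[OF d] is_cokernelD[OF conflationD(2)[OF d0]]
  obtain c where c: "iso C c" "src C c = tgt C d0" "tgt C c = tgt C d" "c \<cdot> d0 = d"
    by (rule cokernels_iso[OF conflationD(2)[OF d0] d])
  show ?thesis
    by (rule conflation_iso_closed[OF d0, where a = "idm C (src C k)" and b = "idm C (tgt C k)" and c = c])
      (use c ty iso_idm in auto)
qed

lemma deflation_cmp_iso:
  assumes p: "deflation Cf p" and \<theta>: "iso C \<theta>" "src C \<theta> = tgt C p"
  shows "deflation Cf (\<theta> \<cdot> p)"
proof -
  obtain k where k: "(k, p) \<in> Cf" using p unfolding deflation_def by blast
  note ty = is_kernelD[OF conflationD(1)[OF k]] iso_Mor[OF \<theta>(1)] \<theta>(2)
  have "(k, \<theta> \<cdot> p) \<in> Cf"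
    by (rule conflation_iso_closed[OF k, where a = "idm C (src C k)" and b = "idm C (tgt C k)" and c = \<theta>])
      (use \<theta> ty iso_idm in auto)
  then show ?thesis unfolding deflation_def by blast
qed

end

section \<open>Deflation-exact categories\<close>

locale deflation_exact_cat =
  fixes C :: "('o, 'm, 'x) addcat_scheme" and Cf :: "('m \<times> 'm) set"
  assumes deflation_exact: "deflation_exact C Cf"

sublocale deflation_exact_cat \<subseteq> conflation_cat C Cf
  using deflation_exact unfolding deflation_exact_def by unfold_locales blast

context deflation_exact_cat
begin

lemma pullback_of_deflation:
  assumes "deflation Cf p" "f \<in> Mor C" "tgt C f = tgt C p"
  obtains q1 q2 where "is_pullback C f p q1 q2" "deflation Cf q1"
proof -
  have "\<forall>p f. deflation Cf p \<longrightarrow> f \<in> Mor C \<longrightarrow> tgt C f = tgt C p \<longrightarrow>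
      (\<exists>q1 q2. is_pullback C f p q1 q2 \<and> deflation Cf q1)"
    using deflation_exact unfolding deflation_exact_def by (elim conjE) assumption
  then show thesis using assms that by blast
qed

lemma pullback_conflation:
  assumes pb: "is_pullback C f p q1 q2" and kp: "(k, p) \<in> Cf" and q1: "deflation Cf q1"
  obtains \<kappa> where "(\<kappa>, q1) \<in> Cf" "q2 \<cdot> \<kappa> = k" "src C \<kappa> = src C k"
proof -
  obtain \<kappa> where "is_kernel C \<kappa> q1" "q2 \<cdot> \<kappa> = k" "src C \<kappa> = src C k"
    by (rule pullback_kernel[OF pb conflationD(1)[OF kp]])
  with kernel_conflation[OF q1] show thesis by (intro that[of \<kappa>]) auto
qed


text \<open>The pullback \<open>R\<close> of \<open>d'\<close> and \<open>d\<close> splits as \<open>A \<oplus> B'\<close> through \<open>\<kappa>\<close>, \<open>r1\<close> and the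
  retraction \<open>m\<close>; with the section \<open>s\<close> of \<open>r1\<close>, the inverse of \<open>\<theta>\<close> is \<open>r2 \<circ> s\<close>.\<close>

lemma short_five_lemma:
  assumes kd: "(k, d) \<in> Cf" and kd': "(k', d') \<in> Cf"
    and \<theta>: "\<theta> \<in> Mor C" "src C \<theta> = tgt C k" "tgt C \<theta> = tgt C k'" "\<theta> \<cdot> k = k'" "d' \<cdot> \<theta> = d"
  shows "iso C \<theta>"
proof -
  note k = is_kernelD[OF conflationD(1)[OF kd]] and k' = is_kernelD[OF conflationD(1)[OF kd']]
  have "tgt C (d' \<cdot> \<theta>) = tgt C d'" using \<theta>(1-3) k'(1-3) by simp
  then have tgt_d: "tgt C d = tgt C d'" unfolding \<theta>(5) .
  have "deflation Cf d" using kd unfolding deflation_def by blast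
  then obtain r1 r2 where pb: "is_pullback C d' d r1 r2" and r1: "deflation Cf r1"
    by (rule pullback_of_deflation) (use k'(2) tgt_d in auto)
  note r = is_pullbackD[OF pb]
  obtain \<kappa> where \<kappa>: "(\<kappa>, r1) \<in> Cf" "r2 \<cdot> \<kappa> = k" "src C \<kappa> = src C k"
    by (rule pullback_conflation[OF pb kd r1])
  note \<kappa>' = is_kernelD[OF conflationD(1)[OF \<kappa>(1)]]
  have "src C (\<theta> \<cdot> k) = src C k" using \<theta>(1-3) k(1-3) by simp
  then have src_k': "src C k' = src C k" unfolding \<theta>(4) .
  note ty = k(1-3) k'(1-3) r(1-8) \<kappa>'(1-3) \<kappa>(3) \<theta>(1-3) src_k'
  obtain \<sigma> where \<sigma>: "\<sigma> \<in> Mor C" "src C \<sigma> = tgt C k" "tgt C \<sigma> = src C r1"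
      "r1 \<cdot> \<sigma> = \<theta>" "r2 \<cdot> \<sigma> = idm C (tgt C k)"
    by (rule pullback_lift[OF pb, of \<theta> "idm C (tgt C k)"]) (use ty \<theta>(5) in auto)
  obtain m where m: "m \<in> Mor C" "src C m = src C r1" "tgt C m = src C k'" "\<theta> \<cdot> r2 = k' \<cdot> m \<oplus> r1"
      "m \<cdot> \<kappa> = idm C (src C \<kappa>)" "m \<cdot> \<sigma> = \<zero>\<^bsub>tgt C k,src C k'\<^esub>"
    by (rule pullback_retraction[OF conflationD(1)[OF kd'] pb _ _ _ \<theta>(5) _ _ \<kappa>'(4) _ \<sigma>(1) _ _ \<sigma>(4)])
      (use ty \<sigma>(1-3,5) \<kappa>(2) \<theta>(4) in auto)
  obtain s where s: "s \<in> Mor C" "src C s = tgt C r1" "tgt C s = tgt C \<kappa>" "r1 \<cdot> s = idm C (tgt C r1)"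
      "m \<cdot> s = \<zero>\<^bsub>tgt C r1,tgt C m\<^esub>" "s \<cdot> r1 \<oplus> \<kappa> \<cdot> m = idm C (tgt C \<kappa>)"
    by (rule cokernel_splitting[OF conflationD(2)[OF \<kappa>(1)] m(1) _ m(5)]) (use ty m in auto)
  note ty = ty \<sigma>(1-3) m(1-3) s(1-3)
  have "\<theta> \<cdot> (r2 \<cdot> s) = (k' \<cdot> m \<oplus> r1) \<cdot> s"
    unfolding m(4)[symmetric] by (rule cmp_assoc) (use ty in auto)
  also have "\<dots> = (k' \<cdot> m) \<cdot> s \<oplus> r1 \<cdot> s" by (rule cmp_madd_left) (use ty in auto)
  also have "(k' \<cdot> m) \<cdot> s = k' \<cdot> (m \<cdot> s)" by (rule cmp_assoc[symmetric]) (use ty in auto)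
  finally have right_inv: "\<theta> \<cdot> (r2 \<cdot> s) = idm C (tgt C \<theta>)" using ty s(4,5) by simp
  have "(s \<cdot> r1 \<oplus> \<kappa> \<cdot> m) \<cdot> \<sigma> = (s \<cdot> r1) \<cdot> \<sigma> \<oplus> (\<kappa> \<cdot> m) \<cdot> \<sigma>"
    by (rule cmp_madd_left) (use ty in auto)
  also have "(s \<cdot> r1) \<cdot> \<sigma> = s \<cdot> \<theta>" unfolding \<sigma>(4)[symmetric] by (rule cmp_assoc[symmetric]) (use ty in auto)
  also have "(\<kappa> \<cdot> m) \<cdot> \<sigma> = \<kappa> \<cdot> (m \<cdot> \<sigma>)" by (rule cmp_assoc[symmetric]) (use ty in auto)
  finally have s\<theta>: "s \<cdot> \<theta> = \<sigma>" using ty s(6) m(6) by simp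
  have "(r2 \<cdot> s) \<cdot> \<theta> = r2 \<cdot> (s \<cdot> \<theta>)" by (rule cmp_assoc[symmetric]) (use ty in auto)
  then have left_inv: "(r2 \<cdot> s) \<cdot> \<theta> = idm C (src C \<theta>)" using ty s\<theta> \<sigma>(5) by simp
  show ?thesis
    by (rule isoI[OF \<theta>(1), of "r2 \<cdot> s"]) (use ty right_inv left_inv in auto)
qed


lemma A3_comparison_deflation:
  assumes A3: "axiom_A3 C Cf AA" and xy: "(x, y) \<in> Cf" and kq: "(k, q) \<in> Cf"
    and f: "deflation Cf f" "f \<in> hom C (src C x) (src C k)" and A: "src C k \<in> AA"
    and \<psi>: "\<psi> \<in> hom C (tgt C x) (tgt C k)" "\<psi> \<cdot> x = k \<cdot> f" "q \<cdot> \<psi> = y"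
  shows "deflation Cf \<psi>"
proof -
  note tx = is_kernelD[OF conflationD(1)[OF xy]] and tk = is_kernelD[OF conflationD(1)[OF kq]]
  note ty = tx(1-3) tk(1-3) f(2)[unfolded in_hom_iff] \<psi>(1)[unfolded in_hom_iff]
  have "tgt C (q \<cdot> \<psi>) = tgt C q" by (rule cmp_tgt) (use ty in auto)
  then have tgt_y: "tgt C y = tgt C q" unfolding \<psi>(3) .
  have "inflation Cf x" using xy unfolding inflation_def by blast
  then have "\<exists>p i. is_pushout C x f p i \<and> deflation Cf p \<and> inflation Cf i"
    using A3[unfolded axiom_A3_def, rule_format, of x f] f(1) A ty by simp
  then obtain p i where po: "is_pushout C x f p i" and p: "deflation Cf p" and i: "inflation Cf i"
    by blast
  note po' = is_pushoutD(4-8)[OF po]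
  obtain c where c: "c \<in> Mor C" "src C c = tgt C p" "tgt C c = tgt C y" "c \<cdot> p = y"
      "c \<cdot> i = \<zero>\<^bsub>src C k,tgt C y\<^esub>"
    by (rule pushout_desc[OF po, of y "\<zero>\<^bsub>src C k,tgt C y\<^esub>"]) (use ty tx(4) in auto)
  have "c \<cdot> i = \<zero>\<^bsub>src C i,tgt C y\<^esub>" using c(5) po' ty by simp
  then have "is_cokernel C c i" by (rule pushout_cokernel[OF conflationD(2)[OF xy] po c(1,2,4)])
  then have ic: "(i, c) \<in> Cf" by (rule cokernel_conflation[OF i])
  obtain \<theta> where \<theta>: "\<theta> \<in> Mor C" "src C \<theta> = tgt C p" "tgt C \<theta> = tgt C k" "\<theta> \<cdot> p = \<psi>" "\<theta> \<cdot> i = k"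
    by (rule pushout_desc[OF po, of \<psi> k]) (use ty \<psi>(2) in auto)
  have "q \<cdot> \<theta> = c"
  proof (rule pushout_cancel[OF po])
    have "(q \<cdot> \<theta>) \<cdot> p = q \<cdot> (\<theta> \<cdot> p)" by (rule cmp_assoc[symmetric]) (use \<theta>(1-3) po' ty in auto)
    then show "(q \<cdot> \<theta>) \<cdot> p = c \<cdot> p" using \<theta>(4) \<psi>(3) c(4) by simp
    have "(q \<cdot> \<theta>) \<cdot> i = q \<cdot> (\<theta> \<cdot> i)" by (rule cmp_assoc[symmetric]) (use \<theta>(1-3) po' ty in auto)
    then show "(q \<cdot> \<theta>) \<cdot> i = c \<cdot> i" using \<theta>(5) c(5) tk(4) tgt_y by simp
  qed (use \<theta>(1-3) c(1-3) po' ty tgt_y in auto)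
  then have "iso C \<theta>"
    by (intro short_five_lemma[OF ic kq \<theta>(1) _ _ \<theta>(5)]) (use \<theta>(1-3) po' ty in auto)
  then show ?thesis
    using deflation_cmp_iso[OF p, of \<theta>] \<theta> by simp
qed

lemma pullback_comparison_conflation:
  assumes A3: "axiom_A3 C Cf AA" and xy: "(x, y) \<in> Cf" and xy': "(x', y') \<in> Cf"
    and ff: "(f'', f) \<in> Cf" "f \<in> hom C (src C x) (src C x')" and A: "src C x' \<in> AA"
    and g: "g \<cdot> x = x' \<cdot> f"
    and Q: "is_pullback C h y' qb qa" "deflation Cf qb"
    and \<psi>: "\<psi> \<in> hom C (tgt C x) (src C qb)" "qb \<cdot> \<psi> = y" "qa \<cdot> \<psi> = g"
  shows "(x \<cdot> f'', \<psi>) \<in> Cf"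
proof -
  note tx = is_kernelD[OF conflationD(1)[OF xy]] and tx' = is_kernelD[OF conflationD(1)[OF xy']]
  note Q' = is_pullbackD[OF Q(1)]
  obtain k' where k': "(k', qb) \<in> Cf" "qa \<cdot> k' = x'" "src C k' = src C x'"
    by (rule pullback_conflation[OF Q(1) xy' Q(2)])
  note tk = is_kernelD[OF conflationD(1)[OF k'(1)]]
  note ty = tx(1-3) tx'(1-3) Q'(1-8) tk(1-3) k'(3) ff(2)[unfolded in_hom_iff]
    \<psi>(1)[unfolded in_hom_iff]
  have "tgt C (qb \<cdot> \<psi>) = tgt C qb" by (rule cmp_tgt) (use ty in auto)
  then have tgt_y: "tgt C y = tgt C qb" unfolding \<psi>(2) .
  have \<psi>x: "\<psi> \<cdot> x = k' \<cdot> f"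
  proof (rule pullback_cancel[OF Q(1)])
    have "qb \<cdot> (\<psi> \<cdot> x) = (qb \<cdot> \<psi>) \<cdot> x" by (rule cmp_assoc) (use ty in auto)
    also have "\<dots> = (qb \<cdot> k') \<cdot> f" using \<psi>(2) tx(4) tk(4) tgt_y ty by simp
    also have "\<dots> = qb \<cdot> (k' \<cdot> f)" by (rule cmp_assoc[symmetric]) (use ty in auto)
    finally show "qb \<cdot> (\<psi> \<cdot> x) = qb \<cdot> (k' \<cdot> f)" .
    have "qa \<cdot> (\<psi> \<cdot> x) = (qa \<cdot> \<psi>) \<cdot> x" by (rule cmp_assoc) (use ty in auto)
    also have "\<dots> = (qa \<cdot> k') \<cdot> f" using \<psi>(3) k'(2) g by simp
    also have "\<dots> = qa \<cdot> (k' \<cdot> f)" by (rule cmp_assoc[symmetric]) (use ty in auto)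
    finally show "qa \<cdot> (\<psi> \<cdot> x) = qa \<cdot> (k' \<cdot> f)" .
  qed (use ty in auto)
  have "deflation Cf f" using ff(1) unfolding deflation_def by blast
  then have "deflation Cf \<psi>"
    by (rule A3_comparison_deflation[OF A3 xy k'(1) _ _ _ _ \<psi>x \<psi>(2)])
      (use ty A in \<open>auto simp: in_hom_iff\<close>)
  moreover have "is_kernel C (x \<cdot> f'') \<psi>"
    by (rule kernel_of_map_between_kernels[OF conflationD(1)[OF xy] conflationD(1)[OF k'(1)]
          conflationD(1)[OF ff(1)]])
      (use ty \<psi>x \<psi>(2) in auto)
  ultimately show ?thesis by (rule kernel_conflation)
qed

lemma pullback_comparison:
  assumes A3: "axiom_A3 C Cf AA" and xy: "(x, y) \<in> Cf" and xy': "(x', y') \<in> Cf"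
    and ff: "(f'', f) \<in> Cf" "f \<in> hom C (src C x) (src C x')" and A: "src C x' \<in> AA"
    and g: "g \<in> hom C (tgt C x) (tgt C x')" "g \<cdot> x = x' \<cdot> f"
    and h: "h \<in> hom C (tgt C y) (tgt C y')" "h \<cdot> y = y' \<cdot> g"
  obtains qb qa \<psi> where "is_pullback C h y' qb qa" "tgt C \<psi> = src C qb" "qb \<cdot> \<psi> = y" "qa \<cdot> \<psi> = g"
    "(x \<cdot> f'', \<psi>) \<in> Cf"
proof -
  note ty = is_kernelD(1-3)[OF conflationD(1)[OF xy]] is_kernelD(1-3)[OF conflationD(1)[OF xy']]
    g(1)[unfolded in_hom_iff] h(1)[unfolded in_hom_iff]
  have "deflation Cf y'" using xy' unfolding deflation_def by blast
  then obtain qb qa where Q: "is_pullback C h y' qb qa" "deflation Cf qb"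
    by (rule pullback_of_deflation[of y' h]) (use ty in auto)
  obtain \<psi> where \<psi>: "\<psi> \<in> Mor C" "src C \<psi> = tgt C x" "tgt C \<psi> = src C qb" "qb \<cdot> \<psi> = y" "qa \<cdot> \<psi> = g"
    by (rule pullback_lift[OF Q(1), of y g]) (use ty h(2) in auto)
  have "(x \<cdot> f'', \<psi>) \<in> Cf"
    by (rule pullback_comparison_conflation[OF A3 xy xy' ff A g(2) Q _ \<psi>(4,5)])
      (use \<psi> in \<open>simp add: in_hom_iff\<close>)
  with Q(1) \<psi>(3-5) show thesis by (rule that)
qed

lemma pullback_comparison_top_row:
  assumes Q: "is_pullback C h y' qb qa" and hh: "(h'', h) \<in> Cf" and g: "deflation Cf g"
    and e\<psi>: "(e, \<psi>) \<in> Cf" and \<psi>: "tgt C \<psi> = src C qb" "qb \<cdot> \<psi> = y" "qa \<cdot> \<psi> = g"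
  obtains x'' r1 r2 where "(x'', r1) \<in> Cf" "(r2, g) \<in> Cf" "r2 \<cdot> x'' = e" "src C x'' = src C e"
    "src C r2 = tgt C x''" "tgt C r1 = src C h''" "y \<cdot> r2 = h'' \<cdot> r1"
proof -
  note Q' = is_pullbackD[OF Q] and t\<psi> = is_kernelD[OF conflationD(1)[OF e\<psi>]]
  obtain k2 where k2: "is_kernel C k2 qa" "qb \<cdot> k2 = h''" "src C k2 = src C h''"
    by (rule pullback_kernel[OF is_pullback_sym[OF Q] conflationD(1)[OF hh]])
  note tk2 = is_kernelD[OF k2(1)]
  have "deflation Cf \<psi>" using e\<psi> unfolding deflation_def by blast
  then obtain r1 r2 where R: "is_pullback C k2 \<psi> r1 r2" "deflation Cf r1"
    by (rule pullback_of_deflation[of \<psi> k2]) (use Q' tk2 t\<psi> \<psi>(1) in auto)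
  note R' = is_pullbackD[OF R(1)]
  have "(r2, qa \<cdot> \<psi>) \<in> Cf"
    using kernel_conflation[OF _ kernel_pullback_cmp[OF k2(1) R(1)]] g \<psi>(3) by simp
  moreover obtain x'' where x'': "(x'', r1) \<in> Cf" "r2 \<cdot> x'' = e" "src C x'' = src C e"
    by (rule pullback_conflation[OF R(1) e\<psi> R(2)])
  moreover have "y \<cdot> r2 = h'' \<cdot> r1"
  proof -
    have "y \<cdot> r2 = qb \<cdot> (\<psi> \<cdot> r2)"
      unfolding \<psi>(2)[symmetric] by (rule cmp_assoc[symmetric]) (use Q' R' t\<psi> \<psi>(1) in auto)
    also have "\<dots> = (qb \<cdot> k2) \<cdot> r1"
      unfolding R'(9)[symmetric] by (rule cmp_assoc) (use Q' R' tk2 in auto)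
    finally show ?thesis unfolding k2(2) .
  qed
  moreover have "tgt C r1 = src C h''" using R' k2(3) by simp
  moreover have "src C r2 = tgt C x''" using R' is_kernelD[OF conflationD(1)[OF x''(1)]] by simp
  ultimately show thesis using \<psi>(3) x'' by (intro that[of x'' r1 r2]) auto
qed

end

theorem mainTheorem6:
  fixes C :: "('o, 'm, 'x) addcat_scheme" and Cf :: "('m \<times> 'm) set" and AA :: "'o set"
  assumes "deflation_exact C Cf"
    and "AA \<subseteq> Ob C" and "AA \<noteq> {}" and "axiom_A3 C Cf AA"
    and "(x, y) \<in> Cf" and "(x', y') \<in> Cf"
    and "f \<in> hom C (src C x) (src C x')"
    and "g \<in> hom C (tgt C x) (tgt C x')"
    and "h \<in> hom C (tgt C y) (tgt C y')"
    and "deflation Cf f" and "deflation Cf g" and "deflation Cf h"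
    and "cmp C g x = cmp C x' f" and "cmp C h y = cmp C y' g"
    and "src C x' \<in> AA"
  shows "\<exists>x'' y'' f'' g'' h''.
           (x'', y'') \<in> Cf \<and> (f'', f) \<in> Cf \<and> (g'', g) \<in> Cf \<and> (h'', h) \<in> Cf \<and>
           src C f'' = src C x'' \<and> src C g'' = tgt C x'' \<and> src C h'' = tgt C y'' \<and>
           cmp C x f'' = cmp C g'' x'' \<and> cmp C y g'' = cmp C h'' y'' \<and>
           is_pullback C x g'' f'' x'' \<and> is_pushout C y g h y'"
proof -
  interpret deflation_exact_cat C Cf by (rule deflation_exact_cat.intro) (rule assms(1))
  note xy = assms(5) and xy' = assms(6)
  obtain f'' where ff: "(f'', f) \<in> Cf" using assms(10) unfolding deflation_def by blast
  obtain h'' where hh: "(h'', h) \<in> Cf" using assms(12) unfolding deflation_def by blast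
  obtain qb qa \<psi> where Q: "is_pullback C h y' qb qa" "tgt C \<psi> = src C qb" "qb \<cdot> \<psi> = y" "qa \<cdot> \<psi> = g"
      "(x \<cdot> f'', \<psi>) \<in> Cf"
    by (rule pullback_comparison[OF assms(4) xy xy' ff assms(7,15,8,13,9,14)])
  obtain x'' r1 r2 where row: "(x'', r1) \<in> Cf" "(r2, g) \<in> Cf" "r2 \<cdot> x'' = x \<cdot> f''"
      "src C x'' = src C (x \<cdot> f'')" "src C r2 = tgt C x''" "tgt C r1 = src C h''" "y \<cdot> r2 = h'' \<cdot> r1"
    by (rule pullback_comparison_top_row[OF Q(1) hh assms(11) Q(5,2-4)])
  note ty = is_kernelD(1-3)[OF conflationD(1)[OF xy]] is_kernelD(1-3)[OF conflationD(1)[OF ff]]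
    is_kernelD(1-3)[OF conflationD(1)[OF row(1)]] is_kernelD(1-3)[OF conflationD(1)[OF row(2)]]
    row(5,6) assms(7,8)[unfolded in_hom_iff]
  have "is_pullback C x r2 f'' x''"
    by (rule kernel_map_square_pullback[OF conflationD(1)[OF row(1)] conflationD(1)[OF xy]
          conflationD(1)[OF hh] _ _ row(6) row(3)[symmetric] row(7)])
      (use ty row(4) in \<open>auto simp: in_hom_iff\<close>)
  moreover have "is_pushout C y g h y'"
    by (rule cokernel_map_square_pushout[OF conflationD(2)[OF xy] conflationD(2)[OF xy']
          conflationD(2)[OF ff] assms(7-9,13,14)])
  moreover have "src C x'' = src C f''" using row(4) ty by simp
  ultimately show ?thesis
    using row(1-3,5-7) ff hh
    by (intro exI[of _ x''] exI[of _ r1] exI[of _ f''] exI[of _ r2] exI[of _ h''] conjI) simp_all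
qed

end
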